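(* Let $K$ be a field complete with respect to a discrete valuation with finite residue field, and let $\mathcal T$ be the Bruhat–Tits tree of $PSL(2,K)$. Let $\Gamma$ be a group, $\rho:\Gamma\to PSL(2,K)$ a representation (acting on $\mathcal T$), and $\Upsilon\subset\Gamma$ a normal subgroup such that $\rho(\Upsilon)$ has a nonempty set of fixed points in $\mathcal T$. Suppose $\rho(\Gamma)$ is Zariski-dense in $PSL(2,K)$ and not contained in any compact subgroup of $PSL(2,K)$. Then $\rho(\Upsilon)$ is trivial.
   Context: The Bruhat–Tits tree $\mathcal T$: vertices are lattices ($\mathcal O_K$-submodules $M\subset K^2$ of rank two spanning $K^2$) up to multiplication by $K^*$; two classes are joined by an edge of length $1$ if representatives satisfy $M_1\subset M_2$ with $M_2/M_1\cong\mathcal O_K/\mathfrak m$. $SL(2,K)$ acts by $M\mapsto gM$, the center acting trivially, giving an isometric action of $PSL(2,K)$. *)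

theory Defs
  imports "HOL-Analysis.Analysis" "HOL-Algebra.Coset"
begin

text \<open>A discrete valuation on a field 'k is given by v :: 'k => int on the nonzero
  elements (the value v 0 is irrelevant; conceptually v 0 = infinity).\<close>

definition discrete_valuation :: "('k::field \<Rightarrow> int) \<Rightarrow> bool" where
  "discrete_valuation v \<longleftrightarrow>
     (\<forall>x y. x \<noteq> 0 \<and> y \<noteq> 0 \<longrightarrow> v (x * y) = v x + v y) \<and>
     (\<forall>x y. x \<noteq> 0 \<and> y \<noteq> 0 \<and> x + y \<noteq> 0 \<longrightarrow> v (x + y) \<ge> min (v x) (v y)) \<and>
     (\<forall>n. \<exists>x. x \<noteq> 0 \<and> v x = n)"

definition val_ring :: "('k::field \<Rightarrow> int) \<Rightarrow> 'k set" where
  "val_ring v = {x. x = 0 \<or> v x \<ge> 0}"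

definition val_ideal :: "('k::field \<Rightarrow> int) \<Rightarrow> 'k set" where
  "val_ideal v = {x. x = 0 \<or> v x \<ge> 1}"

definition val_close :: "('k::field \<Rightarrow> int) \<Rightarrow> int \<Rightarrow> 'k \<Rightarrow> 'k \<Rightarrow> bool" where
  "val_close v n x y \<longleftrightarrow> x = y \<or> v (x - y) \<ge> n"

definition val_complete :: "('k::field \<Rightarrow> int) \<Rightarrow> bool" where
  "val_complete v \<longleftrightarrow>
     (\<forall>s :: nat \<Rightarrow> 'k.
        (\<forall>n. \<exists>N. \<forall>i\<ge>N. \<forall>j\<ge>N. val_close v n (s i) (s j)) \<longrightarrow>
        (\<exists>L. \<forall>n. \<exists>N. \<forall>i\<ge>N. val_close v n (s i) L))"

definition finite_residue_field :: "('k::field \<Rightarrow> int) \<Rightarrow> bool" where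
  "finite_residue_field v \<longleftrightarrow>
     finite (val_ring v // {(x, y). x \<in> val_ring v \<and> y \<in> val_ring v \<and> x - y \<in> val_ideal v})"

definition local_field_val :: "('k::field \<Rightarrow> int) \<Rightarrow> bool" where
  "local_field_val v \<longleftrightarrow> discrete_valuation v \<and> val_complete v \<and> finite_residue_field v"

definition val_topology :: "('k::field \<Rightarrow> int) \<Rightarrow> 'k topology" where
  "val_topology v = topology (\<lambda>U. \<forall>x\<in>U. \<exists>n. {y. val_close v n y x} \<subseteq> U)"

text \<open>(a,b,c,d) represents the matrix [[a,b],[c,d]].\<close>
type_synonym 'k mat2 = "'k \<times> 'k \<times> 'k \<times> 'k"

fun m2mult :: "'k::field mat2 \<Rightarrow> 'k mat2 \<Rightarrow> 'k mat2" where
  "m2mult (a, b, c, d) (a', b', c', d') =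
     (a * a' + b * c', a * b' + b * d', c * a' + d * c', c * b' + d * d')"

fun m2det :: "'k::field mat2 \<Rightarrow> 'k" where
  "m2det (a, b, c, d) = a * d - b * c"

fun m2neg :: "'k::field mat2 \<Rightarrow> 'k mat2" where
  "m2neg (a, b, c, d) = (- a, - b, - c, - d)"

definition m2id :: "'k::field mat2" where
  "m2id = (1, 0, 0, 1)"

fun m2app :: "'k::field mat2 \<Rightarrow> 'k \<times> 'k \<Rightarrow> 'k \<times> 'k" where
  "m2app (a, b, c, d) (x, y) = (a * x + b * y, c * x + d * y)"

definition SL2 :: "'k::field mat2 set" where
  "SL2 = {g. m2det g = 1}"

definition PSL2 :: "'k::field mat2 set monoid" where
  "PSL2 = \<lparr> carrier = {{g, m2neg g} | g. g \<in> SL2},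
            monoid.mult = (\<lambda>A B. {m2mult a b | a b. a \<in> A \<and> b \<in> B}),
            one = {m2id, m2neg m2id} \<rparr>"

definition SL2_topology :: "('k::field \<Rightarrow> int) \<Rightarrow> 'k mat2 topology" where
  "SL2_topology v = subtopology
     (prod_topology (val_topology v) (prod_topology (val_topology v)
        (prod_topology (val_topology v) (val_topology v)))) SL2"

definition PSL2_topology :: "('k::field \<Rightarrow> int) \<Rightarrow> 'k mat2 set topology" where
  "PSL2_topology v = topology (\<lambda>W. W \<subseteq> carrier PSL2 \<and> openin (SL2_topology v) (\<Union>W))"

text \<open>Zariski density in PSL(2,K): the preimage in SL(2,K) is Zariski dense, i.e. every
  polynomial in the four matrix entries vanishing on it vanishes on SL(2,K).
  A polynomial is a finitely supported coefficient function on exponent tuples.\<close>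
definition poly4_eval :: "(nat \<times> nat \<times> nat \<times> nat \<Rightarrow> 'k::field) \<Rightarrow> 'k mat2 \<Rightarrow> 'k" where
  "poly4_eval P g = (case g of (a, b, c, d) \<Rightarrow>
      (\<Sum>(i, j, k, l) \<in> {e. P e \<noteq> 0}. P (i, j, k, l) * a ^ i * b ^ j * c ^ k * d ^ l))"

definition zariski_dense_SL2 :: "'k::field mat2 set \<Rightarrow> bool" where
  "zariski_dense_SL2 S \<longleftrightarrow>
     (\<forall>P :: nat \<times> nat \<times> nat \<times> nat \<Rightarrow> 'k. finite {e. P e \<noteq> 0} \<longrightarrow>
        (\<forall>g\<in>S. poly4_eval P g = 0) \<longrightarrow> (\<forall>g\<in>SL2. poly4_eval P g = 0))"

definition zariski_dense_PSL2 :: "'k::field mat2 set set \<Rightarrow> bool" where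
  "zariski_dense_PSL2 H \<longleftrightarrow> zariski_dense_SL2 (\<Union>H)"

definition is_lattice :: "('k::field \<Rightarrow> int) \<Rightarrow> ('k \<times> 'k) set \<Rightarrow> bool" where
  "is_lattice v M \<longleftrightarrow>
     (\<exists>e1 e2. fst e1 * snd e2 - snd e1 * fst e2 \<noteq> 0 \<and>
        M = {(s * fst e1 + t * fst e2, s * snd e1 + t * snd e2) | s t.
               s \<in> val_ring v \<and> t \<in> val_ring v})"

definition scal2 :: "'k::field \<Rightarrow> 'k \<times> 'k \<Rightarrow> 'k \<times> 'k" where
  "scal2 c u = (c * fst u, c * snd u)"

definition lattice_equiv :: "('k::field \<Rightarrow> int) \<Rightarrow> (('k \<times> 'k) set \<times> ('k \<times> 'k) set) set" where
  "lattice_equiv v = {(M, N). is_lattice v M \<and> is_lattice v N \<and>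
                        (\<exists>c. c \<noteq> 0 \<and> N = scal2 c ` M)}"

definition BT_vertices :: "('k::field \<Rightarrow> int) \<Rightarrow> ('k \<times> 'k) set set set" where
  "BT_vertices v = {M. is_lattice v M} // lattice_equiv v"

text \<open>M \<subseteq> N with N/M isomorphic to O/m as O-modules (witnessed by an O-linear
  surjection N -> O/m with kernel M, O/m represented by O modulo m).\<close>
definition quot_is_residue :: "('k::field \<Rightarrow> int) \<Rightarrow> ('k \<times> 'k) set \<Rightarrow> ('k \<times> 'k) set \<Rightarrow> bool" where
  "quot_is_residue v M N \<longleftrightarrow> M \<subseteq> N \<and>
     (\<exists>\<phi>. (\<forall>u\<in>N. \<phi> u \<in> val_ring v) \<and>
          (\<forall>u\<in>N. \<forall>w\<in>N. \<phi> (fst u + fst w, snd u + snd w) - (\<phi> u + \<phi> w) \<in> val_ideal v) \<and>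
          (\<forall>a\<in>val_ring v. \<forall>u\<in>N. \<phi> (scal2 a u) - a * \<phi> u \<in> val_ideal v) \<and>
          (\<forall>r\<in>val_ring v. \<exists>u\<in>N. \<phi> u - r \<in> val_ideal v) \<and>
          (\<forall>u\<in>N. u \<in> M \<longleftrightarrow> \<phi> u \<in> val_ideal v))"

definition BT_edge :: "('k::field \<Rightarrow> int) \<Rightarrow> ('k \<times> 'k) set set \<Rightarrow> ('k \<times> 'k) set set \<Rightarrow> bool" where
  "BT_edge v X Y \<longleftrightarrow> X \<in> BT_vertices v \<and> Y \<in> BT_vertices v \<and>
     ((\<exists>M\<in>X. \<exists>N\<in>Y. quot_is_residue v M N) \<or> (\<exists>M\<in>Y. \<exists>N\<in>X. quot_is_residue v M N))"

text \<open>Points of the geometric realization of the tree, in barycentric coordinates: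
  either a vertex, or a point t X + (1-t) Y in the interior of an edge.\<close>
definition BT_points :: "('k::field \<Rightarrow> int) \<Rightarrow> (('k \<times> 'k) set set \<Rightarrow> real) set" where
  "BT_points v =
     {p. (\<exists>X\<in>BT_vertices v. p = (\<lambda>Z. if Z = X then 1 else 0)) \<or>
         (\<exists>X Y t. BT_edge v X Y \<and> X \<noteq> Y \<and> 0 < t \<and> t < 1 \<and>
                  p = (\<lambda>Z. if Z = X then t else if Z = Y then 1 - t else 0))}"

definition PSL2_act_vertex :: "'k::field mat2 set \<Rightarrow> ('k \<times> 'k) set set \<Rightarrow> ('k \<times> 'k) set set" where
  "PSL2_act_vertex A X = {m2app g ` M | g M. g \<in> A \<and> M \<in> X}"

definition BT_fixes :: "('k::field \<Rightarrow> int) \<Rightarrow> 'k mat2 set \<Rightarrow> (('k \<times> 'k) set set \<Rightarrow> real) \<Rightarrow> bool" where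
  "BT_fixes v A p \<longleftrightarrow> (\<forall>Z\<in>BT_vertices v. p (PSL2_act_vertex A Z) = p Z)"

definition BT_fixed_points :: "('k::field \<Rightarrow> int) \<Rightarrow> 'k mat2 set set \<Rightarrow> (('k \<times> 'k) set set \<Rightarrow> real) set" where
  "BT_fixed_points v H = {p \<in> BT_points v. \<forall>A\<in>H. BT_fixes v A p}"

end

(* If rho(Upsilon) fixes a point of the tree, that point is a vertex or lies on an edge, so
   every element of rho(Upsilon) maps a lattice M into the homothety class of M or of a
   neighbour L; hence the lifts of rho(Upsilon) to SL(2,K) have uniformly bounded entries, and
   the lifts of rho(Gamma) conjugate this bounded set into itself.
   Suppose rho(Upsilon) contains a non-central n. The matrices 1, n, b^-1 n b, n b^-1 n b span
   all 2x2 matrices unless b lies in the zero set of a nonzero polynomial, so by Zariski density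
   this happens for some b in the lift of rho(Gamma). Expanding an arbitrary matrix X in that
   basis shows that the conjugates g^-1 X g, g in rho(Gamma), are bounded; for elementary X
   this bounds the entries of g itself.
   A bounded subgroup of SL(2,K) preserves the lattice sum_g g O^2, whose stabiliser is closed
   and bounded in K^4, hence compact because K is a local field. Thus rho(Gamma) would lie in a
   compact subgroup of PSL(2,K). *)

theory Submission
  imports Defs
begin

locale discrete_val =
  fixes v :: "'k::field \<Rightarrow> int"
  assumes discrete_valuation: "discrete_valuation v"
begin

lemma val_mult: "x \<noteq> 0 \<Longrightarrow> y \<noteq> 0 \<Longrightarrow> v (x * y) = v x + v y"
  using discrete_valuation unfolding discrete_valuation_def by blast

lemma val_add_ge_min: "x \<noteq> 0 \<Longrightarrow> y \<noteq> 0 \<Longrightarrow> x + y \<noteq> 0 \<Longrightarrow> min (v x) (v y) \<le> v (x + y)"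
  using discrete_valuation unfolding discrete_valuation_def by blast

lemma val_surj: "\<exists>x. x \<noteq> 0 \<and> v x = n"
  using discrete_valuation unfolding discrete_valuation_def by blast

lemma val_one: "v 1 = 0"
  using val_mult[of 1 1] by simp

lemma val_minus_one: "v (-1) = 0"
  using val_mult[of "-1" "-1"] val_one by simp

lemma val_uminus: "x \<noteq> 0 \<Longrightarrow> v (- x) = v x"
  using val_mult[of "-1" x] val_minus_one by simp

lemma val_inverse: "x \<noteq> 0 \<Longrightarrow> v (inverse x) = - v x"
  using val_mult[of x "inverse x"] val_one by simp

lemma val_diff_commute: "v (x - y) = v (y - x)"
  using val_uminus[of "x - y"] by (cases "x = y") simp_all

lemma exists_nonzero_square_ne_one: "\<exists>p :: 'k. p \<noteq> 0 \<and> p * p \<noteq> 1"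
proof -
  obtain p where p: "p \<noteq> 0" "v p = 1" using val_surj by blast
  then have "v (p * p) \<noteq> v 1" using val_mult[of p p] val_one by simp
  then have "p * p \<noteq> 1" by auto
  then show ?thesis using p(1) by blast
qed

text \<open>\<open>val_ge n x\<close> says that \<open>x\<close> lies in the \<open>n\<close>-th power of the maximal ideal; it
  bypasses the junk value \<open>v 0\<close>.\<close>

definition val_ge :: "int \<Rightarrow> 'k \<Rightarrow> bool" where
  "val_ge n x \<longleftrightarrow> x = 0 \<or> n \<le> v x"

lemma val_ge_zero [simp]: "val_ge n 0"
  by (simp add: val_ge_def)

lemma val_ge_one: "val_ge 0 1"
  by (simp add: val_ge_def val_one)

lemma val_ge_uminus [simp]: "val_ge n (- x) \<longleftrightarrow> val_ge n x"
  by (cases "x = 0") (auto simp: val_ge_def val_uminus)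

lemma val_ge_diff_commute: "val_ge n (x - y) \<longleftrightarrow> val_ge n (y - x)"
  using val_ge_uminus[of n "y - x"] by simp

lemma val_ge_add: "val_ge n x \<Longrightarrow> val_ge n y \<Longrightarrow> val_ge n (x + y)"
  unfolding val_ge_def using val_add_ge_min[of x y] by fastforce

lemma val_ge_diff: "val_ge n x \<Longrightarrow> val_ge n y \<Longrightarrow> val_ge n (x - y)"
  using val_ge_add[of n x "- y"] by simp

lemma val_ge_mult: "val_ge n x \<Longrightarrow> val_ge m y \<Longrightarrow> val_ge (n + m) (x * y)"
  unfolding val_ge_def by (cases "x = 0 \<or> y = 0") (auto simp: val_mult)

lemma val_ge_mono: "m \<le> n \<Longrightarrow> val_ge n x \<Longrightarrow> val_ge m x"
  unfolding val_ge_def by auto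

lemma val_ge_exists: "\<exists>n. val_ge n x"
  unfolding val_ge_def by auto

lemma val_ge_val: "val_ge (v x) x"
  unfolding val_ge_def by auto

lemma not_val_ge_val_plus_one: "x \<noteq> 0 \<Longrightarrow> \<not> val_ge (v x + 1) x"
  unfolding val_ge_def by auto

lemma val_ge_inverse: "x \<noteq> 0 \<Longrightarrow> val_ge (- v x) (inverse x)"
  unfolding val_ge_def by (simp add: val_inverse)

lemma val_ge_square_cancel: "0 \<le> k \<Longrightarrow> val_ge (- k) (x * x) \<Longrightarrow> val_ge (- k) x"
  unfolding val_ge_def by (cases "x = 0") (auto simp: val_mult)

lemma val_ge_iff_val_ring: "x \<in> val_ring v \<longleftrightarrow> val_ge 0 x"
  unfolding val_ring_def val_ge_def by simp

lemma val_ge_iff_val_ideal: "x \<in> val_ideal v \<longleftrightarrow> val_ge 1 x"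
  unfolding val_ideal_def val_ge_def by simp

lemma val_ge_iff_val_close: "val_close v n y x \<longleftrightarrow> val_ge n (y - x)"
  unfolding val_close_def val_ge_def by auto

end

locale local_field =
  fixes v :: "'k::field \<Rightarrow> int"
  assumes local_field: "local_field_val v"

sublocale local_field \<subseteq> discrete_val
  using local_field by unfold_locales (simp add: local_field_val_def)


fun monomial4 :: "nat \<times> nat \<times> nat \<times> nat \<Rightarrow> 'k::field mat2 \<Rightarrow> 'k" where
  "monomial4 (i, j, k, l) (a, b, c, d) = a ^ i * b ^ j * c ^ k * d ^ l"

fun exponent_add4 :: "nat \<times> nat \<times> nat \<times> nat \<Rightarrow> nat \<times> nat \<times> nat \<times> nat \<Rightarrow> nat \<times> nat \<times> nat \<times> nat" where
  "exponent_add4 (i, j, k, l) (i', j', k', l') = (i + i', j + j', k + k', l + l')"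

lemma monomial4_exponent_add4:
  "monomial4 (exponent_add4 e1 e2) g = monomial4 e1 g * monomial4 e2 g"
  by (cases e1; cases e2; cases g) (simp add: power_add algebra_simps)

lemma poly4_eval_eq_sum:
  assumes "finite S" "\<And>e. e \<notin> S \<Longrightarrow> P e = 0"
  shows "poly4_eval P g = (\<Sum>e\<in>S. P e * monomial4 e g)"
proof -
  obtain a b c d where g: "g = (a, b, c, d)" by (cases g) auto
  have sub: "{e. P e \<noteq> 0} \<subseteq> S" using assms(2) by blast
  have "poly4_eval P g = (\<Sum>e\<in>{e. P e \<noteq> 0}. P e * monomial4 e g)"
    unfolding poly4_eval_def g by (auto intro!: sum.cong)
  also have "\<dots> = (\<Sum>e\<in>S. P e * monomial4 e g)"
    by (rule sum.mono_neutral_left[OF assms(1) sub]) auto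
  finally show ?thesis .
qed

definition poly_fun4 :: "('k::field mat2 \<Rightarrow> 'k) \<Rightarrow> bool" where
  "poly_fun4 f \<longleftrightarrow> (\<exists>P S. finite S \<and> (\<forall>e. e \<notin> S \<longrightarrow> P e = 0) \<and>
     (\<forall>g. f g = (\<Sum>e\<in>S. P e * monomial4 e g)))"

lemma zariski_dense_SL2_poly_fun4_vanishing:
  assumes "zariski_dense_SL2 G" "poly_fun4 f" "\<forall>g\<in>G. f g = 0" "g \<in> SL2"
  shows "f g = 0"
proof -
  obtain P S where PS: "finite S" "\<forall>e. e \<notin> S \<longrightarrow> P e = 0"
    "\<forall>g. f g = (\<Sum>e\<in>S. P e * monomial4 e g)"
    using assms(2) unfolding poly_fun4_def by blast
  have "finite {e. P e \<noteq> 0}" using PS(1,2) by (metis (mono_tags) finite_subset mem_Collect_eq subsetI)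
  moreover have "poly4_eval P h = f h" for h
  proof -
    have "poly4_eval P h = (\<Sum>e\<in>S. P e * monomial4 e h)"
      by (rule poly4_eval_eq_sum) (use PS in auto)
    then show ?thesis using PS(3)[rule_format, of h] by simp
  qed
  ultimately show ?thesis using assms(1,3,4) unfolding zariski_dense_SL2_def by metis
qed

lemma poly_fun4_const: "poly_fun4 (\<lambda>g. c)"
  unfolding poly_fun4_def
  by (rule exI[of _ "\<lambda>e. if e = (0, 0, 0, 0) then c else 0"], rule exI[of _ "{(0, 0, 0, 0)}"]) auto

lemma poly_fun4_entries:
  "poly_fun4 (\<lambda>g. fst g)" "poly_fun4 (\<lambda>g. fst (snd g))"
  "poly_fun4 (\<lambda>g. fst (snd (snd g)))" "poly_fun4 (\<lambda>g. snd (snd (snd g)))"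
  unfolding poly_fun4_def
  by (rule exI[of _ "\<lambda>e. if e = (1, 0, 0, 0) then 1 else 0"], rule exI[of _ "{(1, 0, 0, 0)}"], force,
      rule exI[of _ "\<lambda>e. if e = (0, 1, 0, 0) then 1 else 0"], rule exI[of _ "{(0, 1, 0, 0)}"], force,
      rule exI[of _ "\<lambda>e. if e = (0, 0, 1, 0) then 1 else 0"], rule exI[of _ "{(0, 0, 1, 0)}"], force,
      rule exI[of _ "\<lambda>e. if e = (0, 0, 0, 1) then 1 else 0"], rule exI[of _ "{(0, 0, 0, 1)}"], force)

lemma poly_fun4_add:
  assumes "poly_fun4 f" "poly_fun4 h"
  shows "poly_fun4 (\<lambda>g. f g + h g)"
proof -
  obtain P S where PS: "finite S" "\<forall>e. e \<notin> S \<longrightarrow> P e = 0"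
    "\<forall>g. f g = (\<Sum>e\<in>S. P e * monomial4 e g)"
    using assms(1) unfolding poly_fun4_def by blast
  obtain Q T where QT: "finite T" "\<forall>e. e \<notin> T \<longrightarrow> Q e = 0"
    "\<forall>g. h g = (\<Sum>e\<in>T. Q e * monomial4 e g)"
    using assms(2) unfolding poly_fun4_def by blast
  have f: "f g = (\<Sum>e\<in>S \<union> T. P e * monomial4 e g)" for g
    unfolding PS(3)[rule_format] by (rule sum.mono_neutral_left) (use PS QT in auto)
  have h: "h g = (\<Sum>e\<in>S \<union> T. Q e * monomial4 e g)" for g
    unfolding QT(3)[rule_format] by (rule sum.mono_neutral_left) (use PS QT in auto)
  show ?thesis unfolding poly_fun4_def
    using PS QT f h by (intro exI[of _ "\<lambda>e. P e + Q e"] exI[of _ "S \<union> T"])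
      (auto simp: sum.distrib algebra_simps)
qed

lemma poly_fun4_mult:
  assumes "poly_fun4 f" "poly_fun4 h"
  shows "poly_fun4 (\<lambda>g. f g * h g)"
proof -
  obtain P S where PS: "finite S" "\<forall>e. e \<notin> S \<longrightarrow> P e = 0"
    "\<forall>g. f g = (\<Sum>e\<in>S. P e * monomial4 e g)"
    using assms(1) unfolding poly_fun4_def by blast
  obtain Q T where QT: "finite T" "\<forall>e. e \<notin> T \<longrightarrow> Q e = 0"
    "\<forall>g. h g = (\<Sum>e\<in>T. Q e * monomial4 e g)"
    using assms(2) unfolding poly_fun4_def by blast
  define ad where "ad = (\<lambda>p. exponent_add4 (fst p) (snd p))"
  define U where "U = ad ` (S \<times> T)"
  define R where "R = (\<lambda>e. \<Sum>p\<in>{p. p \<in> S \<times> T \<and> ad p = e}. P (fst p) * Q (snd p))"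
  have finST: "finite (S \<times> T)" using PS QT by auto
  have finU: "finite U" unfolding U_def using finST by auto
  have R0: "e \<notin> U \<Longrightarrow> R e = 0" for e unfolding R_def U_def by (auto intro!: sum.neutral)
  have "f g * h g = (\<Sum>e\<in>U. R e * monomial4 e g)" for g
  proof -
    have "(\<Sum>e\<in>U. R e * monomial4 e g) =
        (\<Sum>e\<in>U. \<Sum>p\<in>{p. p \<in> S \<times> T \<and> ad p = e}. P (fst p) * Q (snd p) * monomial4 (ad p) g)"
      unfolding R_def by (auto simp: sum_distrib_right intro!: sum.cong)
    also have "\<dots> = (\<Sum>p\<in>S \<times> T. P (fst p) * Q (snd p) * monomial4 (ad p) g)"
      by (rule sum.group[OF finST finU]) (auto simp: U_def)
    also have "\<dots> = (\<Sum>p\<in>S \<times> T. (P (fst p) * monomial4 (fst p) g) * (Q (snd p) * monomial4 (snd p) g))"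
      by (auto simp: ad_def monomial4_exponent_add4 algebra_simps intro!: sum.cong)
    also have "\<dots> = f g * h g"
      unfolding PS(3)[rule_format] QT(3)[rule_format] sum_product sum.cartesian_product
      by (simp add: case_prod_beta)
    finally show ?thesis by simp
  qed
  then show ?thesis unfolding poly_fun4_def using finU R0 by blast
qed

lemma poly_fun4_uminus: "poly_fun4 f \<Longrightarrow> poly_fun4 (\<lambda>g. - f g)"
  using poly_fun4_mult[OF poly_fun4_const, of f "-1"] by simp

lemma poly_fun4_diff: "poly_fun4 f \<Longrightarrow> poly_fun4 h \<Longrightarrow> poly_fun4 (\<lambda>g. f g - h g)"
  using poly_fun4_add[OF _ poly_fun4_uminus] by (simp add: algebra_simps)

lemmas poly_fun4_intros =
  poly_fun4_const poly_fun4_entries poly_fun4_add poly_fun4_mult poly_fun4_diff poly_fun4_uminus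

definition poly_fun4_mat :: "('k::field mat2 \<Rightarrow> 'k mat2) \<Rightarrow> bool" where
  "poly_fun4_mat f \<longleftrightarrow> poly_fun4 (\<lambda>b. fst (f b)) \<and> poly_fun4 (\<lambda>b. fst (snd (f b))) \<and>
     poly_fun4 (\<lambda>b. fst (snd (snd (f b)))) \<and> poly_fun4 (\<lambda>b. snd (snd (snd (f b))))"

lemma poly_fun4_mat_id: "poly_fun4_mat (\<lambda>b. b)"
  unfolding poly_fun4_mat_def by (simp add: poly_fun4_intros)

lemma poly_fun4_mat_const: "poly_fun4_mat (\<lambda>b. c)"
  unfolding poly_fun4_mat_def by (simp add: poly_fun4_intros)


fun m2adj :: "'k::field mat2 \<Rightarrow> 'k mat2" where
  "m2adj (a, b, c, d) = (d, - b, - c, a)"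

fun m2add :: "'k::field mat2 \<Rightarrow> 'k mat2 \<Rightarrow> 'k mat2" where
  "m2add (a, b, c, d) (a', b', c', d') = (a + a', b + b', c + c', d + d')"

fun m2scale :: "'k::field \<Rightarrow> 'k mat2 \<Rightarrow> 'k mat2" where
  "m2scale s (a, b, c, d) = (s * a, s * b, s * c, s * d)"

text \<open>The determinant of four vectors of \<open>K\<^sup>4\<close>, a matrix \<open>(a, b, c, d)\<close> being read as the
  column \<open>(a, b, c, d)\<close>.\<close>

fun det4 :: "'k::field mat2 \<Rightarrow> 'k mat2 \<Rightarrow> 'k mat2 \<Rightarrow> 'k mat2 \<Rightarrow> 'k" where
  "det4 (a1, b1, c1, d1) (a2, b2, c2, d2) (a3, b3, c3, d3) (a4, b4, c4, d4) =
    a1 * (b2 * (c3*d4 - c4*d3) - b3 * (c2*d4 - c4*d2) + b4 * (c2*d3 - c3*d2))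
  - a2 * (b1 * (c3*d4 - c4*d3) - b3 * (c1*d4 - c4*d1) + b4 * (c1*d3 - c3*d1))
  + a3 * (b1 * (c2*d4 - c4*d2) - b2 * (c1*d4 - c4*d1) + b4 * (c1*d2 - c2*d1))
  - a4 * (b1 * (c2*d3 - c3*d2) - b2 * (c1*d3 - c3*d1) + b3 * (c1*d2 - c2*d1))"

definition m2conj :: "'k::field mat2 \<Rightarrow> 'k mat2 \<Rightarrow> 'k mat2" where
  "m2conj n b = m2mult (m2mult (m2adj b) n) b"

lemma det4_cramer:
  "m2scale (det4 w1 w2 w3 w4) x =
     m2add (m2add (m2scale (det4 x w2 w3 w4) w1) (m2scale (det4 w1 x w3 w4) w2))
           (m2add (m2scale (det4 w1 w2 x w4) w3) (m2scale (det4 w1 w2 w3 x) w4))"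
  apply (cases w1; cases w2; cases w3; cases w4; cases x)
  apply (simp only: det4.simps m2scale.simps m2add.simps prod.inject)
  apply (intro conjI)
  by (simp add: algebra_simps)+

lemma m2scale_inverse: "s \<noteq> 0 \<Longrightarrow> m2scale (inverse s) (m2scale s x) = x"
  by (cases x) simp

lemma SL2_iff: "g \<in> SL2 \<longleftrightarrow> m2det g = 1"
  unfolding SL2_def by simp

lemma m2mult_assoc: "m2mult (m2mult x y) z = m2mult x (m2mult y z)"
  by (cases x; cases y; cases z) (simp add: algebra_simps)

lemma m2mult_id [simp]: "m2mult m2id x = x" "m2mult x m2id = x"
  by (cases x; simp add: m2id_def)+

lemma m2neg_m2neg [simp]: "m2neg (m2neg g) = g"
  by (cases g) simp

lemma m2mult_m2neg: "m2mult (m2neg a) b = m2neg (m2mult a b)" "m2mult a (m2neg b) = m2neg (m2mult a b)"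
  by (cases a; cases b; simp add: algebra_simps)+

lemma m2det_m2neg [simp]: "m2det (m2neg g) = m2det g"
  by (cases g) (simp add: algebra_simps)

lemma m2det_mult: "m2det (m2mult a b) = m2det a * m2det b"
  by (cases a; cases b) (simp add: algebra_simps)

lemma m2det_m2adj [simp]: "m2det (m2adj g) = m2det g"
  by (cases g) (simp add: algebra_simps)

lemma m2adj_m2adj [simp]: "m2adj (m2adj a) = a"
  by (cases a) simp

lemma m2adj_mult: "m2adj (m2mult a b) = m2mult (m2adj b) (m2adj a)"
  by (cases a; cases b) (simp add: algebra_simps)

lemma m2adj_mult_cancel:
  "m2det g = 1 \<Longrightarrow> m2mult (m2adj g) g = m2id" "m2det g = 1 \<Longrightarrow> m2mult g (m2adj g) = m2id"
  by (cases g; auto simp: m2id_def algebra_simps)+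

lemma m2app_mult: "m2app (m2mult g h) u = m2app g (m2app h u)"
  by (cases g; cases h; cases u) (simp add: algebra_simps)

lemma m2app_add:
  "m2app g (fst u + fst w, snd u + snd w) =
     (fst (m2app g u) + fst (m2app g w), snd (m2app g u) + snd (m2app g w))"
  by (cases g; cases u; cases w) (simp add: algebra_simps)

lemma m2app_id: "m2app m2id u = u"
  by (cases u) (simp add: m2id_def)

lemma m2app_adj_cancel: "m2det h = 1 \<Longrightarrow> m2app (m2adj h) (m2app h u) = u"
  by (simp add: m2adj_mult_cancel m2app_id flip: m2app_mult)

lemma m2conj_mult:
  assumes "m2det g = 1"
  shows "m2conj (m2mult x y) g = m2mult (m2conj x g) (m2conj y g)"
proof -
  have "m2mult (m2conj x g) (m2conj y g) =
      m2mult (m2mult (m2adj g) x) (m2mult (m2mult g (m2adj g)) (m2mult y g))"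
    unfolding m2conj_def by (simp add: m2mult_assoc)
  also have "\<dots> = m2conj (m2mult x y) g"
    unfolding m2adj_mult_cancel(2)[OF assms] m2conj_def by (simp add: m2mult_assoc)
  finally show ?thesis by simp
qed

lemma m2conj_add: "m2conj (m2add x y) g = m2add (m2conj x g) (m2conj y g)"
  unfolding m2conj_def by (cases x; cases y; cases g) (simp add: algebra_simps)

lemma m2conj_scale: "m2conj (m2scale s x) g = m2scale s (m2conj x g)"
  unfolding m2conj_def by (cases x; cases g) (simp add: algebra_simps)

lemma m2conj_id: "m2det g = 1 \<Longrightarrow> m2conj m2id g = m2id"
  unfolding m2conj_def by (simp add: m2adj_mult_cancel)

lemma m2conj_elementary:
  "m2conj (0, 0, 1, 0) (p, q, r, s) = (- (q * p), - (q * q), p * p, p * q)"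
  "m2conj (0, 1, 0, 0) (p, q, r, s) = (s * r, s * s, - (r * r), - (r * s))"
  unfolding m2conj_def by simp_all

lemma poly_fun4_mat_mult:
  "poly_fun4_mat f \<Longrightarrow> poly_fun4_mat g \<Longrightarrow> poly_fun4_mat (\<lambda>b. m2mult (f b) (g b))"
proof -
  have "m2mult x y =
    (fst x * fst y + fst (snd x) * fst (snd (snd y)),
     fst x * fst (snd y) + fst (snd x) * snd (snd (snd y)),
     fst (snd (snd x)) * fst y + snd (snd (snd x)) * fst (snd (snd y)),
     fst (snd (snd x)) * fst (snd y) + snd (snd (snd x)) * snd (snd (snd y)))" for x y :: "'a mat2"
    by (cases x; cases y) simp
  then show "poly_fun4_mat f \<Longrightarrow> poly_fun4_mat g \<Longrightarrow> poly_fun4_mat (\<lambda>b. m2mult (f b) (g b))"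
    unfolding poly_fun4_mat_def by (simp add: poly_fun4_intros)
qed

lemma poly_fun4_mat_adj: "poly_fun4_mat f \<Longrightarrow> poly_fun4_mat (\<lambda>b. m2adj (f b))"
proof -
  have "m2adj x = (snd (snd (snd x)), - fst (snd x), - fst (snd (snd x)), fst x)" for x :: "'a mat2"
    by (cases x) simp
  then show "poly_fun4_mat f \<Longrightarrow> poly_fun4_mat (\<lambda>b. m2adj (f b))"
    unfolding poly_fun4_mat_def by (simp add: poly_fun4_intros)
qed

lemma poly_fun4_det4:
  assumes "poly_fun4_mat f1" "poly_fun4_mat f2" "poly_fun4_mat f3" "poly_fun4_mat f4"
  shows "poly_fun4 (\<lambda>b. det4 (f1 b) (f2 b) (f3 b) (f4 b))"
proof -
  have "det4 x1 x2 x3 x4 =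
    (let a1 = fst x1; b1 = fst (snd x1); c1 = fst (snd (snd x1)); d1 = snd (snd (snd x1));
      a2 = fst x2; b2 = fst (snd x2); c2 = fst (snd (snd x2)); d2 = snd (snd (snd x2));
      a3 = fst x3; b3 = fst (snd x3); c3 = fst (snd (snd x3)); d3 = snd (snd (snd x3));
      a4 = fst x4; b4 = fst (snd x4); c4 = fst (snd (snd x4)); d4 = snd (snd (snd x4)) in
      a1 * (b2 * (c3*d4 - c4*d3) - b3 * (c2*d4 - c4*d2) + b4 * (c2*d3 - c3*d2))
    - a2 * (b1 * (c3*d4 - c4*d3) - b3 * (c1*d4 - c4*d1) + b4 * (c1*d3 - c3*d1))
    + a3 * (b1 * (c2*d4 - c4*d2) - b2 * (c1*d4 - c4*d1) + b4 * (c1*d2 - c2*d1))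
    - a4 * (b1 * (c2*d3 - c3*d2) - b2 * (c1*d3 - c3*d1) + b3 * (c1*d2 - c2*d1)))"
    for x1 x2 x3 x4 :: "'a mat2"
    by (cases x1; cases x2; cases x3; cases x4) simp
  then show ?thesis
    using assms unfolding poly_fun4_mat_def Let_def by (simp add: poly_fun4_intros)
qed


section \<open>Conjugates of a non-central element span all matrices\<close>

text \<open>Nonzero exactly when \<open>1, n, b\<inverse> n b, n b\<inverse> n b\<close> form a basis of the \<open>2 \<times> 2\<close>
  matrices.\<close>

definition conj_span_det :: "'k::field mat2 \<Rightarrow> 'k mat2 \<Rightarrow> 'k" where
  "conj_span_det n b = det4 m2id n (m2conj n b) (m2mult n (m2conj n b))"

lemma poly_fun4_conj_span_det: "poly_fun4 (conj_span_det n)"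
proof -
  have "poly_fun4 (\<lambda>b. det4 m2id n (m2conj n b) (m2mult n (m2conj n b)))"
    unfolding m2conj_def
    by (intro poly_fun4_det4 poly_fun4_mat_const poly_fun4_mat_mult poly_fun4_mat_adj poly_fun4_mat_id)
  then show ?thesis unfolding conj_span_det_def[abs_def] .
qed

lemma conj_span_det_upper:
  "al * de - be * ga = 1 \<Longrightarrow>
    conj_span_det (al, be, ga, de) (1, t, 0, 1) = ga^2 * t^2 * ((al + de)^2 - 4 - ga^2 * t^2)"
  unfolding conj_span_det_def m2conj_def m2id_def by simp algebra

lemma conj_span_det_lower:
  "al * de - be * ga = 1 \<Longrightarrow>
    conj_span_det (al, be, ga, de) (1, 0, t, 1) = be^2 * t^2 * ((al + de)^2 - 4 - be^2 * t^2)"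
  unfolding conj_span_det_def m2conj_def m2id_def by simp algebra

lemma conj_span_det_diagonal:
  "conj_span_det (al, 0, 0, de) (1 + p, 1, p, 1) = - ((al - de) ^ 4 * (1 + p) * p)"
  unfolding conj_span_det_def m2conj_def m2id_def by simp algebra

lemma (in discrete_val) conj_span_det_nonzero:
  fixes n :: "'k mat2"
  assumes "n \<in> SL2" "n \<noteq> m2id" "n \<noteq> m2neg m2id"
  shows "\<exists>b\<in>SL2. conj_span_det n b \<noteq> 0"
proof -
  obtain al be ga de where n: "n = (al, be, ga, de)" by (cases n) auto
  have det: "al * de - be * ga = 1" using assms(1) n by (simp add: SL2_iff)
  obtain p :: 'k where p: "p \<noteq> 0" "p * p \<noteq> 1" using exists_nonzero_square_ne_one by blast
  have off_diagonal: "\<exists>t\<in>{1, p}. c^2 * t^2 * (s - c^2 * t^2) \<noteq> 0" if "c \<noteq> 0" for c s :: 'k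
  proof (rule ccontr)
    assume "\<not> ?thesis"
    then have "s = c^2" "c^2 * p^2 * (c^2 - c^2 * p^2) = 0" using that by auto
    then have "c^2 * p^2 * c^2 * (1 - p^2) = 0" by (simp add: algebra_simps)
    then show False using that p by (simp add: power2_eq_square)
  qed
  consider "ga \<noteq> 0" | "ga = 0" "be \<noteq> 0" | "ga = 0" "be = 0" by blast
  then show ?thesis
  proof cases
    case 1
    obtain t where "ga^2 * t^2 * ((al + de)^2 - 4 - ga^2 * t^2) \<noteq> 0"
      using off_diagonal[of ga "(al + de)^2 - 4", OF 1] by blast
    then have "conj_span_det n (1, t, 0, 1) \<noteq> 0" using conj_span_det_upper[OF det] n by simp
    then show ?thesis by (intro bexI[of _ "(1, t, 0, 1)"]) (simp_all add: SL2_iff)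
  next
    case 2
    obtain t where "be^2 * t^2 * ((al + de)^2 - 4 - be^2 * t^2) \<noteq> 0"
      using off_diagonal[of be "(al + de)^2 - 4", OF 2(2)] by blast
    then have "conj_span_det n (1, 0, t, 1) \<noteq> 0" using conj_span_det_lower[OF det] n by simp
    then show ?thesis by (intro bexI[of _ "(1, 0, t, 1)"]) (simp_all add: SL2_iff)
  next
    case 3
    have "al \<noteq> de"
    proof
      assume "al = de"
      then have "(al - 1) * (al + 1) = 0" using det 3 by (simp add: algebra_simps)
      then have "al = 1 \<or> al = -1" by (auto simp: eq_neg_iff_add_eq_0)
      then show False using assms(2,3) n \<open>al = de\<close> 3 by (auto simp: m2id_def)
    qed
    moreover have "1 + p \<noteq> 0"
    proof
      assume "1 + p = 0"
      then have "p = -1" by (simp add: eq_neg_iff_add_eq_0 add.commute)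
      then show False using p(2) by simp
    qed
    ultimately have "conj_span_det n (1 + p, 1, p, 1) \<noteq> 0"
      using conj_span_det_diagonal[of al de p] n 3 p(1) by simp
    then show ?thesis by (intro bexI[of _ "(1 + p, 1, p, 1)"]) (simp_all add: SL2_iff)
  qed
qed


context discrete_val
begin

fun entries_bounded :: "int \<Rightarrow> 'k mat2 \<Rightarrow> bool" where
  "entries_bounded k (a, b, c, d) \<longleftrightarrow>
     val_ge (- k) a \<and> val_ge (- k) b \<and> val_ge (- k) c \<and> val_ge (- k) d"

lemma entries_bounded_mono: "k \<le> k' \<Longrightarrow> entries_bounded k x \<Longrightarrow> entries_bounded k' x"
  by (cases x) (auto intro: val_ge_mono[of "- k'" "- k"])

lemma entries_bounded_add: "entries_bounded k x \<Longrightarrow> entries_bounded k y \<Longrightarrow> entries_bounded k (m2add x y)"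
  by (cases x; cases y) (auto intro: val_ge_add)

lemma entries_bounded_scale:
  "val_ge (- ks) s \<Longrightarrow> entries_bounded k x \<Longrightarrow> entries_bounded (ks + k) (m2scale s x)"
  by (cases x) (auto dest: val_ge_mult[of "- ks" s "- k"])

lemma entries_bounded_mult:
  assumes "entries_bounded k x" "entries_bounded k' y"
  shows "entries_bounded (k + k') (m2mult x y)"
proof -
  have prod: "val_ge (- k - k') (p * q)" if "val_ge (- k) p" "val_ge (- k') q" for p q
    using val_ge_mult[OF that] by (simp add: algebra_simps)
  show ?thesis using assms by (cases x; cases y) (auto intro!: val_ge_add prod)
qed

lemma entries_bounded_exists: "\<exists>k. entries_bounded k x"
proof -
  obtain a b c d where x: "x = (a, b, c, d)" by (cases x) auto
  obtain na nb nc nd where "val_ge na a" "val_ge nb b" "val_ge nc c" "val_ge nd d"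
    using val_ge_exists by metis
  then have "entries_bounded (- min (min na nb) (min nc nd)) x" unfolding x
    by (simp; meson val_ge_mono min.cobounded1 min.cobounded2 order.trans)
  then show ?thesis by blast
qed

lemma entries_bounded_id: "entries_bounded 0 m2id"
  by (simp add: m2id_def val_ge_one)

text \<open>Preserved by sums, scalar multiples and products, hence passes from a basis to all
  matrices.\<close>

definition conj_bounded :: "'k mat2 set \<Rightarrow> 'k mat2 \<Rightarrow> bool" where
  "conj_bounded G X \<longleftrightarrow> (\<exists>k. \<forall>g\<in>G. entries_bounded k (m2conj X g))"

lemma conj_bounded_add: "conj_bounded G X \<Longrightarrow> conj_bounded G Y \<Longrightarrow> conj_bounded G (m2add X Y)"
  unfolding conj_bounded_def m2conj_add
  by (meson entries_bounded_add entries_bounded_mono max.cobounded1 max.cobounded2)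

lemma conj_bounded_scale: "conj_bounded G X \<Longrightarrow> conj_bounded G (m2scale s X)"
proof -
  assume "conj_bounded G X"
  then obtain k where k: "\<forall>g\<in>G. entries_bounded k (m2conj X g)" unfolding conj_bounded_def by blast
  obtain ks where "val_ge (- ks) s" using val_ge_exists by (metis minus_minus)
  then have "\<forall>g\<in>G. entries_bounded (ks + k) (m2conj (m2scale s X) g)"
    unfolding m2conj_scale using k entries_bounded_scale by blast
  then show ?thesis unfolding conj_bounded_def by blast
qed

lemma conj_bounded_mult:
  "G \<subseteq> SL2 \<Longrightarrow> conj_bounded G X \<Longrightarrow> conj_bounded G Y \<Longrightarrow> conj_bounded G (m2mult X Y)"
  unfolding conj_bounded_def using m2conj_mult entries_bounded_mult by (metis SL2_iff subsetD)

lemma conj_bounded_id: "G \<subseteq> SL2 \<Longrightarrow> conj_bounded G m2id"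
  unfolding conj_bounded_def using m2conj_id entries_bounded_id by (metis SL2_iff subsetD)

lemma conj_bounded_all:
  assumes "G \<subseteq> SL2" "conj_span_det n b \<noteq> 0"
    and "conj_bounded G n" "conj_bounded G (m2conj n b)"
  shows "conj_bounded G X"
proof -
  have "conj_bounded G (m2scale (conj_span_det n b) X)"
    unfolding conj_span_det_def
    by (subst det4_cramer) (intro conj_bounded_add conj_bounded_scale conj_bounded_mult conj_bounded_id assms)
  then have "conj_bounded G (m2scale (inverse (conj_span_det n b)) (m2scale (conj_span_det n b) X))"
    by (rule conj_bounded_scale)
  then show ?thesis using m2scale_inverse assms(2) by metis
qed

text \<open>Conjugating the elementary matrices by \<open>g\<close> yields the squares of the entries of \<open>g\<close>.\<close>

lemma bounded_if_conj_bounded_elementary: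
  assumes "conj_bounded G (0, 0, 1, 0)" "conj_bounded G (0, 1, 0, 0)"
  shows "\<exists>k. \<forall>g\<in>G. entries_bounded k g"
proof -
  obtain k1 where k1: "\<forall>g\<in>G. entries_bounded k1 (m2conj (0, 0, 1, 0) g)"
    using assms(1) unfolding conj_bounded_def by blast
  obtain k2 where k2: "\<forall>g\<in>G. entries_bounded k2 (m2conj (0, 1, 0, 0) g)"
    using assms(2) unfolding conj_bounded_def by blast
  define k where "k = max 0 (max k1 k2)"
  have "entries_bounded k g" if "g \<in> G" for g
  proof -
    obtain p q r s where g: "g = (p, q, r, s)" by (cases g) auto
    have "val_ge (- k1) (p * p)" "val_ge (- k1) (q * q)"
      "val_ge (- k2) (r * r)" "val_ge (- k2) (s * s)"
      using k1[rule_format, OF that] k2[rule_format, OF that] unfolding g m2conj_elementary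
      by simp_all
    then have "val_ge (- k) (p * p)" "val_ge (- k) (q * q)" "val_ge (- k) (r * r)" "val_ge (- k) (s * s)"
      unfolding k_def by (auto intro: val_ge_mono[rotated])
    then show ?thesis unfolding g k_def by (auto intro!: val_ge_square_cancel)
  qed
  then show ?thesis by blast
qed

lemma bounded_if_normalises_bounded_noncentral:
  assumes "G \<subseteq> SL2" "zariski_dense_SL2 G"
    and "n \<in> N" "n \<in> SL2" "n \<noteq> m2id" "n \<noteq> m2neg m2id"
    and "\<forall>g\<in>G. \<forall>x\<in>N. m2conj x g \<in> N" "\<forall>x\<in>N. entries_bounded j x"
  shows "\<exists>k. \<forall>g\<in>G. entries_bounded k g"
proof -
  obtain b where "b \<in> G" "conj_span_det n b \<noteq> 0"
    using conj_span_det_nonzero[OF assms(4-6)] assms(2)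
      zariski_dense_SL2_poly_fun4_vanishing[OF _ poly_fun4_conj_span_det] by blast
  moreover have "conj_bounded G x" if "x \<in> N" for x
    unfolding conj_bounded_def using assms(7,8) that by blast
  ultimately have "conj_bounded G X" for X
    using conj_bounded_all[OF assms(1)] assms(3,7) by blast
  then show ?thesis using bounded_if_conj_bounded_elementary by blast
qed

end


definition psl_class :: "'k::field mat2 \<Rightarrow> 'k mat2 set" where
  "psl_class g = {g, m2neg g}"

lemma psl_class_m2neg [simp]: "psl_class (m2neg g) = psl_class g"
  unfolding psl_class_def by auto

lemma psl_class_eq_if_mem: "x \<in> psl_class a \<Longrightarrow> psl_class x = psl_class a"
  unfolding psl_class_def by auto

lemma mem_psl_class: "a \<in> psl_class a"
  unfolding psl_class_def by auto

lemma carrier_PSL2: "carrier PSL2 = psl_class ` SL2"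
proof -
  have "carrier PSL2 = {{g, m2neg g} | g. g \<in> SL2}"
    unfolding PSL2_def by (simp only: partial_object.select_convs)
  then show ?thesis unfolding psl_class_def by blast
qed

lemma one_PSL2: "\<one>\<^bsub>PSL2\<^esub> = psl_class m2id"
  unfolding PSL2_def psl_class_def by simp

lemma mult_PSL2: "psl_class a \<otimes>\<^bsub>PSL2\<^esub> psl_class b = psl_class (m2mult a b)"
proof -
  have "psl_class a \<otimes>\<^bsub>PSL2\<^esub> psl_class b = {m2mult x y | x y. x \<in> psl_class a \<and> y \<in> psl_class b}"
    unfolding PSL2_def by simp
  also have "\<dots> = psl_class (m2mult a b)"
  proof -
    have "m2mult a (m2neg b) = m2neg (m2mult a b)" "m2mult (m2neg a) b = m2neg (m2mult a b)"
      "m2mult (m2neg a) (m2neg b) = m2mult a b"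
      by (simp_all add: m2mult_m2neg)
    note eqs = this
    show ?thesis unfolding psl_class_def
    proof (intro Set.set_eqI iffI)
      fix z
      assume "z \<in> {m2mult x y |x y. x \<in> {a, m2neg a} \<and> y \<in> {b, m2neg b}}"
      then obtain x y where "z = m2mult x y" "x = a \<or> x = m2neg a" "y = b \<or> y = m2neg b" by blast
      then show "z \<in> {m2mult a b, m2neg (m2mult a b)}" using eqs by auto
    next
      fix z
      assume "z \<in> {m2mult a b, m2neg (m2mult a b)}"
      then have "z = m2mult a b \<or> z = m2mult (m2neg a) b" using eqs by auto
      then show "z \<in> {m2mult x y |x y. x \<in> {a, m2neg a} \<and> y \<in> {b, m2neg b}}" by blast
    qed
  qed
  finally show ?thesis .
qed

lemma PSL2_elem_eq_psl_class: "A \<in> carrier PSL2 \<Longrightarrow> a \<in> A \<Longrightarrow> A = psl_class a"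
  unfolding carrier_PSL2 using psl_class_eq_if_mem by blast

lemma Union_carrier_PSL2: "\<Union>(carrier PSL2) = SL2"
  unfolding carrier_PSL2 psl_class_def SL2_def by auto

lemma group_PSL2: "group (PSL2 :: 'k::field mat2 set monoid)"
proof (rule groupI)
  fix x y :: "'k mat2 set"
  assume "x \<in> carrier PSL2" "y \<in> carrier PSL2"
  then obtain a b where "a \<in> SL2" "b \<in> SL2" "x = psl_class a" "y = psl_class b"
    unfolding carrier_PSL2 by blast
  then show "x \<otimes>\<^bsub>PSL2\<^esub> y \<in> carrier PSL2"
    unfolding carrier_PSL2 by (simp add: mult_PSL2 SL2_iff m2det_mult)
next
  show "\<one>\<^bsub>PSL2\<^esub> \<in> carrier (PSL2 :: 'k mat2 set monoid)"
    unfolding carrier_PSL2 one_PSL2 by (simp add: SL2_iff m2id_def)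
next
  fix x y z :: "'k mat2 set"
  assume "x \<in> carrier PSL2" "y \<in> carrier PSL2" "z \<in> carrier PSL2"
  then obtain a b c where "x = psl_class a" "y = psl_class b" "z = psl_class c"
    unfolding carrier_PSL2 by blast
  then show "x \<otimes>\<^bsub>PSL2\<^esub> y \<otimes>\<^bsub>PSL2\<^esub> z = x \<otimes>\<^bsub>PSL2\<^esub> (y \<otimes>\<^bsub>PSL2\<^esub> z)"
    by (simp add: mult_PSL2 m2mult_assoc)
next
  fix x :: "'k mat2 set"
  assume "x \<in> carrier PSL2"
  then obtain a where "x = psl_class a" unfolding carrier_PSL2 by blast
  then show "\<one>\<^bsub>PSL2\<^esub> \<otimes>\<^bsub>PSL2\<^esub> x = x" by (simp add: one_PSL2 mult_PSL2)
next
  fix x :: "'k mat2 set"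
  assume "x \<in> carrier PSL2"
  then obtain a where a: "a \<in> SL2" "x = psl_class a" unfolding carrier_PSL2 by blast
  then have "psl_class (m2adj a) \<in> carrier PSL2" "psl_class (m2adj a) \<otimes>\<^bsub>PSL2\<^esub> x = \<one>\<^bsub>PSL2\<^esub>"
    unfolding carrier_PSL2 by (auto simp: SL2_iff mult_PSL2 one_PSL2 m2adj_mult_cancel)
  then show "\<exists>y\<in>carrier PSL2. y \<otimes>\<^bsub>PSL2\<^esub> x = \<one>\<^bsub>PSL2\<^esub>" by blast
qed

lemma inv_PSL2: "a \<in> SL2 \<Longrightarrow> inv\<^bsub>PSL2\<^esub> (psl_class a) = psl_class (m2adj a)"
  by (intro group.inv_equality[OF group_PSL2])
    (auto simp: carrier_PSL2 SL2_iff mult_PSL2 one_PSL2 m2adj_mult_cancel)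

lemma PSL2_noncentral_representative:
  assumes "A \<in> carrier PSL2" "A \<noteq> \<one>\<^bsub>PSL2\<^esub>"
  obtains n where "n \<in> A" "n \<in> SL2" "n \<noteq> m2id" "n \<noteq> m2neg m2id"
proof -
  obtain n where n: "n \<in> SL2" "A = psl_class n" using assms(1) unfolding carrier_PSL2 by blast
  moreover from this have "n \<noteq> m2id" "n \<noteq> m2neg m2id" using assms(2) one_PSL2 by auto
  ultimately show ?thesis by (intro that[of n]) (simp_all add: mem_psl_class)
qed

lemma subgroup_PSL2_Union:
  assumes "subgroup H PSL2"
  shows "\<Union>H \<subseteq> SL2" and "m2id \<in> \<Union>H"
    and "g \<in> \<Union>H \<Longrightarrow> h \<in> \<Union>H \<Longrightarrow> m2mult g h \<in> \<Union>H"
    and "g \<in> \<Union>H \<Longrightarrow> m2adj g \<in> \<Union>H"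
proof -
  have class_mem: "psl_class g \<in> H" if g: "g \<in> \<Union>H" for g
  proof -
    obtain A where A: "A \<in> H" "g \<in> A" using g by blast
    then have "A \<in> carrier PSL2" using subgroup.subset[OF assms] by blast
    then show ?thesis using PSL2_elem_eq_psl_class A by metis
  qed
  show SL2: "\<Union>H \<subseteq> SL2"
    using Union_mono[OF subgroup.subset[OF assms]] unfolding Union_carrier_PSL2 .
  have "psl_class m2id \<in> H" using subgroup.one_closed[OF assms] unfolding one_PSL2 .
  then show "m2id \<in> \<Union>H" using mem_psl_class by (rule UnionI)
  show "m2mult g h \<in> \<Union>H" if "g \<in> \<Union>H" "h \<in> \<Union>H"
  proof -
    have "psl_class (m2mult g h) \<in> H"
      using subgroup.m_closed[OF assms class_mem[OF that(1)] class_mem[OF that(2)]] unfolding mult_PSL2 .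
    then show ?thesis using mem_psl_class by (rule UnionI)
  qed
  show "m2adj g \<in> \<Union>H" if "g \<in> \<Union>H"
  proof -
    have "psl_class (m2adj g) \<in> H"
      using subgroup.m_inv_closed[OF assms class_mem[OF that]] inv_PSL2 that SL2 by (metis subsetD)
    then show ?thesis using mem_psl_class by (rule UnionI)
  qed
qed

lemma m2conj_mem_PSL2_conj:
  assumes "A \<in> carrier PSL2" "B \<in> carrier PSL2" "g \<in> A" "n \<in> B"
  shows "m2conj n g \<in> inv\<^bsub>PSL2\<^esub> A \<otimes>\<^bsub>PSL2\<^esub> B \<otimes>\<^bsub>PSL2\<^esub> A"
proof -
  have "g \<in> SL2" using assms(1,3) Union_carrier_PSL2 by blast
  then have "inv\<^bsub>PSL2\<^esub> A \<otimes>\<^bsub>PSL2\<^esub> B \<otimes>\<^bsub>PSL2\<^esub> A = psl_class (m2conj n g)"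
    using PSL2_elem_eq_psl_class[OF assms(1,3)] PSL2_elem_eq_psl_class[OF assms(2,4)]
    by (simp add: inv_PSL2 mult_PSL2 m2conj_def)
  then show ?thesis using mem_psl_class by simp
qed

lemma hom_PSL2_normal_m2conj_closed:
  assumes "group_hom \<Gamma> PSL2 \<rho>" "normal \<Upsilon> \<Gamma>"
    and "g \<in> \<Union>(\<rho> ` carrier \<Gamma>)" "n \<in> \<Union>(\<rho> ` \<Upsilon>)"
  shows "m2conj n g \<in> \<Union>(\<rho> ` \<Upsilon>)"
proof -
  interpret group_hom \<Gamma> PSL2 \<rho> by fact
  obtain x u where x: "x \<in> carrier \<Gamma>" "g \<in> \<rho> x" and u: "u \<in> \<Upsilon>" "n \<in> \<rho> u"
    using assms(3,4) by blast
  have u': "u \<in> carrier \<Gamma>" using u(1) assms(2) normal_imp_subgroup subgroup.subset by blast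
  have "\<rho> (inv\<^bsub>\<Gamma>\<^esub> x \<otimes>\<^bsub>\<Gamma>\<^esub> u \<otimes>\<^bsub>\<Gamma>\<^esub> x) = inv\<^bsub>PSL2\<^esub> \<rho> x \<otimes>\<^bsub>PSL2\<^esub> \<rho> u \<otimes>\<^bsub>PSL2\<^esub> \<rho> x"
    using x(1) u' by simp
  moreover have "inv\<^bsub>\<Gamma>\<^esub> x \<otimes>\<^bsub>\<Gamma>\<^esub> u \<otimes>\<^bsub>\<Gamma>\<^esub> x \<in> \<Upsilon>"
    using normal.inv_op_closed1[OF assms(2) x(1) u(1)] .
  ultimately show ?thesis
    using m2conj_mem_PSL2_conj[OF _ _ x(2) u(2)] x(1) u' by (metis UN_I hom_closed)
qed


section \<open>Lattices and the Bruhat--Tits tree\<close>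

context discrete_val
begin

definition lattice_between :: "int \<Rightarrow> ('k \<times> 'k) set \<Rightarrow> bool" where
  "lattice_between j M \<longleftrightarrow>
     (\<forall>u\<in>M. val_ge (- j) (fst u) \<and> val_ge (- j) (snd u)) \<and>
     (\<forall>x y. val_ge j x \<and> val_ge j y \<longrightarrow> (x, y) \<in> M)"

lemma lattice_between_mono: "lattice_between j M \<Longrightarrow> j \<le> j' \<Longrightarrow> lattice_between j' M"
  unfolding lattice_between_def by (meson neg_le_iff_le val_ge_mono)

lemma lattice_between_exists:
  assumes "is_lattice v M"
  shows "\<exists>j\<ge>0. lattice_between j M"
proof -
  obtain e1 e2 where e: "fst e1 * snd e2 - snd e1 * fst e2 \<noteq> 0"
    "M = {(s * fst e1 + t * fst e2, s * snd e1 + t * snd e2) | s t. s \<in> val_ring v \<and> t \<in> val_ring v}"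
    using assms unfolding is_lattice_def by blast
  define a where "a = fst e1"
  define c where "c = snd e1"
  define b where "b = fst e2"
  define d where "d = snd e2"
  define \<delta> where "\<delta> = a * d - c * b"
  have \<delta>: "\<delta> \<noteq> 0" using e(1) unfolding \<delta>_def a_def b_def c_def d_def by (simp add: mult.commute)
  obtain j0 where j0: "entries_bounded j0 (a, b, c, d)" using entries_bounded_exists by blast
  define j1 where "j1 = max j0 0"
  have j1: "0 \<le> j1" "entries_bounded j1 (a, b, c, d)"
    using entries_bounded_mono[OF _ j0, of j1] unfolding j1_def by auto
  define j where "j = j1 + \<bar>v \<delta>\<bar>"
  have M: "M = {(s * a + t * b, s * c + t * d) | s t. val_ge 0 s \<and> val_ge 0 t}"
    using e(2) unfolding a_def b_def c_def d_def val_ge_iff_val_ring by simp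
  have upper: "val_ge (- j) (fst u) \<and> val_ge (- j) (snd u)" if u: "u \<in> M" for u
  proof -
    obtain s t where st: "u = (s * a + t * b, s * c + t * d)" "val_ge 0 s" "val_ge 0 t"
      using u M by blast
    have "val_ge (- j1) (s * z)" "val_ge (- j1) (t * z)" if "val_ge (- j1) z" for z
      using val_ge_mult[OF st(2) that] val_ge_mult[OF st(3) that] by simp_all
    then have "val_ge (- j1) (fst u) \<and> val_ge (- j1) (snd u)"
      using j1 st(1) by (auto intro!: val_ge_add)
    then show ?thesis using val_ge_mono[of "- j" "- j1"] j_def by auto
  qed
  have lower: "(x, y) \<in> M" if "val_ge j x" "val_ge j y" for x y
  proof -
    define s where "s = (x * d - y * b) * inverse \<delta>"
    define t where "t = (y * a - x * c) * inverse \<delta>"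
    have inv: "val_ge (- v \<delta>) (inverse \<delta>)" using val_ge_inverse[OF \<delta>] .
    have xy: "val_ge (j - j1) (x * d)" "val_ge (j - j1) (y * b)"
      "val_ge (j - j1) (y * a)" "val_ge (j - j1) (x * c)"
      using val_ge_mult[OF that(1), of "- j1" d] val_ge_mult[OF that(2), of "- j1" b]
        val_ge_mult[OF that(2), of "- j1" a] val_ge_mult[OF that(1), of "- j1" c] j1 by simp_all
    have "val_ge (j - j1 + - v \<delta>) s"
      unfolding s_def using val_ge_mult[OF val_ge_diff[OF xy(1,2)] inv] .
    moreover have "val_ge (j - j1 + - v \<delta>) t"
      unfolding t_def using val_ge_mult[OF val_ge_diff[OF xy(3,4)] inv] .
    moreover have "0 \<le> j - j1 + - v \<delta>" unfolding j_def by simp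
    ultimately have "val_ge 0 s" "val_ge 0 t" using val_ge_mono by blast+
    moreover have "s * a + t * b = x" "s * c + t * d = y"
    proof -
      have "s * a + t * b = x * \<delta> * inverse \<delta>" "s * c + t * d = y * \<delta> * inverse \<delta>"
        unfolding s_def t_def \<delta>_def by (simp_all add: algebra_simps)
      then show "s * a + t * b = x" "s * c + t * d = y" using \<delta> by simp_all
    qed
    ultimately show ?thesis unfolding M by force
  qed
  have "0 \<le> j" unfolding j_def using j1 by simp
  then show ?thesis using upper lower unfolding lattice_between_def by blast
qed

text \<open>If \<open>h M = c L\<close> then the columns of \<open>h\<close> lie in \<open>c \<pi>\<^sup>-\<^sup>2\<^sup>j O\<^sup>2\<close> and, applying the same
  argument to \<open>h\<inverse>\<close>, in \<open>c\<inverse> \<pi>\<^sup>-\<^sup>2\<^sup>j O\<^sup>2\<close>; together this bounds the entries independently of \<open>c\<close>.\<close>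

lemma entries_bounded_if_maps_lattice:
  assumes M: "lattice_between j M" and L: "lattice_between j L" and "0 \<le> j"
    and h: "m2det h = 1" and c: "c \<noteq> 0" and hM: "m2app h ` M = scal2 c ` L"
  shows "entries_bounded (2 * j) h"
proof -
  obtain a b c' d where h_def: "h = (a, b, c', d)" by (cases h) auto
  obtain P where P: "P \<noteq> 0" "v P = j" using val_surj by blast
  have invP: "val_ge (- j) (inverse P)" using val_ge_inverse[OF P(1)] P(2) by simp
  have "val_ge j P" using val_ge_val[of P] P(2) by simp
  then have PM: "(P, 0) \<in> M" "(0, P) \<in> M" and PL: "(P, 0) \<in> L" "(0, P) \<in> L"
    using M L unfolding lattice_between_def by auto
  have column: "val_ge (v c - 2 * j) x \<and> val_ge (v c - 2 * j) y"
    if xy: "(x * P, y * P) \<in> scal2 c ` L" for x y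
  proof -
    obtain w where w: "w \<in> L" "(x * P, y * P) = scal2 c w" using xy by blast
    have "val_ge (- j) (fst w)" "val_ge (- j) (snd w)" using L w(1) unfolding lattice_between_def by auto
    then have "val_ge (v c + - j + - j) (c * fst w * inverse P)"
      "val_ge (v c + - j + - j) (c * snd w * inverse P)"
      using val_ge_mult[OF val_ge_mult[OF val_ge_val[of c]] invP] by blast+
    then have "val_ge (v c - 2 * j) (c * fst w * inverse P)" "val_ge (v c - 2 * j) (c * snd w * inverse P)"
      by (simp_all add: algebra_simps)
    moreover have "x = c * fst w * inverse P" "y = c * snd w * inverse P"
      using w(2) P(1) by (auto simp: scal2_def field_simps)
    ultimately show ?thesis by simp
  qed
  have row: "val_ge (- v c - 2 * j) x \<and> val_ge (- v c - 2 * j) y"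
    if "(x * (c * P), y * (c * P)) \<in> M" for x y
  proof -
    have "val_ge (- j) (x * (c * P))" "val_ge (- j) (y * (c * P))"
      using M that unfolding lattice_between_def by auto
    then have vals: "val_ge (- j + - v c + - j) (x * (c * P) * inverse c * inverse P)"
      "val_ge (- j + - v c + - j) (y * (c * P) * inverse c * inverse P)"
      using val_ge_mult[OF val_ge_mult[OF _ val_ge_inverse[OF c]] invP] by blast+
    have "x * (c * P) * inverse c * inverse P = x" "y * (c * P) * inverse c * inverse P = y"
      using P(1) c by (simp_all add: field_simps)
    moreover have "- j + - v c + - j = - v c - 2 * j" by linarith
    ultimately show ?thesis using vals by (simp only:)
  qed
  have pullback: "m2app (m2adj h) (scal2 c w) \<in> M" if w: "w \<in> L" for w
  proof -
    have "scal2 c w \<in> m2app h ` M" using hM w by simp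
    then obtain u where "u \<in> M" "scal2 c w = m2app h u" by blast
    then show ?thesis using m2app_adj_cancel[OF h, of u] by simp
  qed
  have "m2app h (P, 0) \<in> scal2 c ` L" "m2app h (0, P) \<in> scal2 c ` L"
    using hM PM by blast+
  then have "(a * P, c' * P) \<in> scal2 c ` L" "(b * P, d * P) \<in> scal2 c ` L"
    unfolding h_def by simp_all
  then have col_bounds: "val_ge (v c - 2 * j) a" "val_ge (v c - 2 * j) b"
    "val_ge (v c - 2 * j) c'" "val_ge (v c - 2 * j) d"
    using column by blast+
  have "(d * (c * P), (- c') * (c * P)) \<in> M" "((- b) * (c * P), a * (c * P)) \<in> M"
    using pullback[OF PL(1)] pullback[OF PL(2)] unfolding h_def by (simp_all add: scal2_def)
  then have row_bounds: "val_ge (- v c - 2 * j) a" "val_ge (- v c - 2 * j) b"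
    "val_ge (- v c - 2 * j) c'" "val_ge (- v c - 2 * j) d"
    using row[of d "- c'"] row[of "- b" a] by simp_all
  have "val_ge (- (2 * j)) e" if "val_ge (v c - 2 * j) e" "val_ge (- v c - 2 * j) e" for e
    using that unfolding val_ge_def by auto
  then show ?thesis using col_bounds row_bounds unfolding h_def entries_bounded.simps by blast
qed

lemma BT_vertex_representative:
  assumes "X \<in> BT_vertices v"
  obtains M where "is_lattice v M" "X = lattice_equiv v `` {M}" "M \<in> X"
proof -
  obtain M where M: "is_lattice v M" "X = lattice_equiv v `` {M}"
    using assms unfolding BT_vertices_def by (auto elim: quotientE)
  have "scal2 1 ` M = M" by (simp add: scal2_def)
  then have "(M, M) \<in> lattice_equiv v"
    using M(1) unfolding lattice_equiv_def by (intro CollectI case_prodI conjI exI[of _ 1]) auto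
  then show ?thesis using that M by simp
qed

text \<open>A fixed point lies on a vertex \<open>X\<close> or inside an edge \<open>XY\<close>; since the action preserves the
  barycentric coordinates, \<open>X\<close> is mapped into \<open>{X, Y}\<close>.\<close>

lemma BT_fixed_point_vertex_pair:
  assumes "BT_fixed_points v S \<noteq> {}"
  shows "\<exists>X Y. X \<in> BT_vertices v \<and> Y \<in> BT_vertices v \<and> (\<forall>A\<in>S. PSL2_act_vertex A X \<in> {X, Y})"
proof -
  obtain p where p: "p \<in> BT_points v" "\<forall>A\<in>S. BT_fixes v A p"
    using assms unfolding BT_fixed_points_def by blast
  have "\<exists>X Y t. X \<in> BT_vertices v \<and> Y \<in> BT_vertices v \<and> 0 < t \<and>
      p = (\<lambda>Z. if Z = X then t else if Z = Y then 1 - t else 0)"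
  proof -
    consider X where "X \<in> BT_vertices v" "p = (\<lambda>Z. if Z = X then 1 else 0)"
      | X Y t where "BT_edge v X Y" "0 < t" "p = (\<lambda>Z. if Z = X then t else if Z = Y then 1 - t else 0)"
      using p(1) unfolding BT_points_def by blast
    then show ?thesis
    proof cases
      case 1
      \<comment> \<open>a vertex is the degenerate edge \<open>Y = X\<close> with \<open>t = 1\<close>\<close>
      then show ?thesis by (intro exI[of _ X] exI[of _ X] exI[of _ "1::real"]) auto
    next
      case 2
      then show ?thesis unfolding BT_edge_def by blast
    qed
  qed
  then obtain X Y t where XY: "X \<in> BT_vertices v" "Y \<in> BT_vertices v" "0 < t"
    and p_def: "p = (\<lambda>Z. if Z = X then t else if Z = Y then 1 - t else 0)"
    by blast
  have "PSL2_act_vertex A X \<in> {X, Y}" if "A \<in> S" for A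
  proof (rule ccontr)
    assume "PSL2_act_vertex A X \<notin> {X, Y}"
    moreover have "p (PSL2_act_vertex A X) = p X" using p(2) that XY(1) unfolding BT_fixes_def by blast
    ultimately show False using XY(3) unfolding p_def by (simp split: if_splits)
  qed
  then show ?thesis using XY(1,2) by blast
qed

lemma BT_fixed_points_Union_bounded:
  assumes "S \<subseteq> carrier PSL2" "BT_fixed_points v S \<noteq> {}"
  shows "\<exists>j. \<forall>n\<in>\<Union>S. entries_bounded j n"
proof -
  obtain X Y where XY: "X \<in> BT_vertices v" "Y \<in> BT_vertices v"
    "\<forall>A\<in>S. PSL2_act_vertex A X \<in> {X, Y}"
    using BT_fixed_point_vertex_pair[OF assms(2)] by blast
  obtain M where M: "is_lattice v M" "X = lattice_equiv v `` {M}" "M \<in> X"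
    using BT_vertex_representative[OF XY(1)] by blast
  obtain L where L: "is_lattice v L" "Y = lattice_equiv v `` {L}"
    using BT_vertex_representative[OF XY(2)] by blast
  obtain j1 j2 where "0 \<le> j1" "lattice_between j1 M" "0 \<le> j2" "lattice_between j2 L"
    using lattice_between_exists[OF M(1)] lattice_between_exists[OF L(1)] by blast
  then have j: "0 \<le> max j1 j2" "lattice_between (max j1 j2) M" "lattice_between (max j1 j2) L"
    using lattice_between_mono by auto
  have "entries_bounded (2 * max j1 j2) n" if n: "n \<in> \<Union>S" for n
  proof -
    obtain A where A: "A \<in> S" "n \<in> A" using n by blast
    have "n \<in> SL2" using A assms(1) Union_carrier_PSL2 by blast
    then have "m2det n = 1" by (simp add: SL2_iff)
    have "m2app n ` M \<in> PSL2_act_vertex A X"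
      unfolding PSL2_act_vertex_def using A(2) M(3) by blast
    then have "m2app n ` M \<in> X \<or> m2app n ` M \<in> Y" using XY(3) A(1) by blast
    then obtain L' where L': "L' = M \<or> L' = L" "(L', m2app n ` M) \<in> lattice_equiv v"
      using M(2) L(2) by blast
    then obtain c where "c \<noteq> 0" "m2app n ` M = scal2 c ` L'"
      unfolding lattice_equiv_def by blast
    moreover have "lattice_between (max j1 j2) L'" using L'(1) j by blast
    ultimately show ?thesis using entries_bounded_if_maps_lattice[OF j(2) _ j(1)] \<open>m2det n = 1\<close> by blast
  qed
  then show ?thesis by blast
qed

end


context discrete_val
begin

lemma istopology_val: "istopology (\<lambda>U. \<forall>x\<in>U. \<exists>n. {y. val_close v n y x} \<subseteq> U)"
  unfolding istopology_def
proof (intro conjI allI impI ballI)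
  fix S T :: "'k set" and x
  assume "\<forall>x\<in>S. \<exists>n. {y. val_close v n y x} \<subseteq> S" "\<forall>x\<in>T. \<exists>n. {y. val_close v n y x} \<subseteq> T"
    and "x \<in> S \<inter> T"
  then obtain n1 n2 where "{y. val_close v n1 y x} \<subseteq> S" "{y. val_close v n2 y x} \<subseteq> T" by blast
  moreover have "{y. val_close v (max n1 n2) y x} \<subseteq> {y. val_close v n1 y x}"
    "{y. val_close v (max n1 n2) y x} \<subseteq> {y. val_close v n2 y x}"
    unfolding val_close_def by auto
  ultimately show "\<exists>n. {y. val_close v n y x} \<subseteq> S \<inter> T" by blast
next
  fix K :: "'k set set" and x
  assume "\<forall>U\<in>K. \<forall>x\<in>U. \<exists>n. {y. val_close v n y x} \<subseteq> U" "x \<in> \<Union>K"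
  then obtain U n where "U \<in> K" "{y. val_close v n y x} \<subseteq> U" by blast
  then show "\<exists>n. {y. val_close v n y x} \<subseteq> \<Union>K" by blast
qed

lemma openin_val_topology: "openin (val_topology v) U \<longleftrightarrow> (\<forall>x\<in>U. \<exists>n. {y. val_ge n (y - x)} \<subseteq> U)"
  unfolding val_topology_def using istopology_val by (simp add: val_ge_iff_val_close)

lemma topspace_val_topology [simp]: "topspace (val_topology v) = UNIV"
proof -
  have "openin (val_topology v) UNIV" unfolding openin_val_topology by blast
  then show ?thesis using openin_subset by blast
qed

definition val_ball :: "int \<Rightarrow> 'k \<Rightarrow> 'k set" where
  "val_ball n x = {y. val_ge n (y - x)}"

lemma openin_val_ball: "openin (val_topology v) (val_ball n x)"
  unfolding openin_val_topology val_ball_def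
proof
  fix y assume y: "y \<in> {y. val_ge n (y - x)}"
  have "{z. val_ge n (z - y)} \<subseteq> {y. val_ge n (y - x)}"
  proof
    fix z assume "z \<in> {z. val_ge n (z - y)}"
    then have "val_ge n ((z - y) + (y - x))" using y val_ge_add[of n "z - y" "y - x"] by simp
    then show "z \<in> {y. val_ge n (y - x)}" by simp
  qed
  then show "\<exists>m. {z. val_ge m (z - y)} \<subseteq> {y. val_ge n (y - x)}" by blast
qed

definition val_bounded :: "int \<Rightarrow> 'k set" where
  "val_bounded k = {x. val_ge (- k) x}"

lemma closedin_val_bounded: "closedin (val_topology v) (val_bounded k)"
  unfolding closedin_def openin_val_topology val_bounded_def
proof (intro conjI ballI)
  fix x assume x: "x \<in> topspace (val_topology v) - {x. val_ge (- k) x}"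
  have "y \<notin> {x. val_ge (- k) x}" if "val_ge (- k) (y - x)" for y
    using x val_ge_diff[OF _ that, of y] by auto
  then show "\<exists>n. {y. val_ge n (y - x)} \<subseteq> topspace (val_topology v) - {x. val_ge (- k) x}" by auto
qed simp

definition val_dist :: "'k \<Rightarrow> 'k \<Rightarrow> real" where
  "val_dist x y = (if x = y then 0 else 2 powr (- real_of_int (v (x - y))))"

lemma val_dist_commute: "val_dist x y = val_dist y x"
  unfolding val_dist_def using val_diff_commute by auto

lemma val_dist_triangle: "val_dist x z \<le> val_dist x y + val_dist y z"
proof (cases "x = z \<or> x = y \<or> y = z")
  case True
  then show ?thesis unfolding val_dist_def by auto
next
  case False
  then have min: "min (v (x - y)) (v (y - z)) \<le> v (x - z)"
    using val_add_ge_min[of "x - y" "y - z"] by simp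
  have "0 \<le> val_dist x y" "0 \<le> val_dist y z" unfolding val_dist_def by auto
  moreover have "val_dist x z \<le> val_dist x y \<or> val_dist x z \<le> val_dist y z"
  proof (cases "v (x - y) \<le> v (y - z)")
    case True
    then show ?thesis using min False unfolding val_dist_def by auto
  next
    case False
    then show ?thesis using min \<open>\<not> (x = z \<or> x = y \<or> y = z)\<close> unfolding val_dist_def by auto
  qed
  ultimately show ?thesis by linarith
qed

lemma Metric_space_val_dist: "Metric_space UNIV val_dist"
proof
  show "0 \<le> val_dist x y" "val_dist x y = 0 \<longleftrightarrow> x = y" for x y
    unfolding val_dist_def by simp_all
  show "val_dist x y = val_dist y x" for x y by (rule val_dist_commute)
  show "val_dist x z \<le> val_dist x y + val_dist y z" for x y z by (rule val_dist_triangle)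
qed

lemma val_ge_if_val_dist_less: "val_dist x y < 2 powr (- real_of_int n) \<Longrightarrow> val_ge n (y - x)"
  unfolding val_dist_def val_ge_def using val_diff_commute[of x y] by (auto split: if_splits)

lemma val_dist_le_if_val_ge: "val_ge n (y - x) \<Longrightarrow> val_dist x y \<le> 2 powr (- real_of_int n)"
  unfolding val_dist_def val_ge_def using val_diff_commute[of x y] by auto

lemma exists_power_two_less: "0 < (r::real) \<Longrightarrow> \<exists>n::int. 2 powr (- real_of_int n) < r"
proof -
  assume r: "0 < r"
  define n where "n = \<lceil>- log 2 r\<rceil> + 1"
  have "- real_of_int n < log 2 r" unfolding n_def by linarith
  then have "2 powr (- real_of_int n) < 2 powr (log 2 r)" by simp
  then show ?thesis using r by auto
qed

lemma mtopology_val_dist: "Metric_space.mtopology UNIV val_dist = val_topology v"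
proof -
  interpret Metric_space UNIV val_dist by (rule Metric_space_val_dist)
  have "openin mtopology U \<longleftrightarrow> openin (val_topology v) U" for U
    unfolding openin_mtopology openin_val_topology
  proof (intro iffI ballI conjI allI impI)
    fix x assume "U \<subseteq> UNIV \<and> (\<forall>x. x \<in> U \<longrightarrow> (\<exists>r>0. mball x r \<subseteq> U))" "x \<in> U"
    then obtain r where r: "r > 0" "mball x r \<subseteq> U" by blast
    obtain n where n: "2 powr (- real_of_int n) < r" using exists_power_two_less[OF r(1)] by blast
    have "{y. val_ge n (y - x)} \<subseteq> mball x r"
    proof
      fix y assume "y \<in> {y. val_ge n (y - x)}"
      then have "val_dist x y < r" using val_dist_le_if_val_ge[of n y x] n by simp
      then show "y \<in> mball x r" by simp
    qed
    then show "\<exists>n. {y. val_ge n (y - x)} \<subseteq> U" using r(2) by blast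
  next
    fix x assume "\<forall>x\<in>U. \<exists>n. {y. val_ge n (y - x)} \<subseteq> U" "x \<in> U"
    then obtain n where n: "{y. val_ge n (y - x)} \<subseteq> U" by blast
    have "mball x (2 powr (- real_of_int n)) \<subseteq> U" using n val_ge_if_val_dist_less by auto
    then show "\<exists>r>0. mball x r \<subseteq> U" by (intro exI[of _ "2 powr (- real_of_int n)"]) simp
  qed simp
  then show ?thesis by (simp add: topology_eq)
qed

end


section \<open>Compactness of bounded sets over a local field\<close>

context local_field
begin

lemma residue_representatives:
  "\<exists>R. finite R \<and> (\<forall>r\<in>R. val_ge 0 r) \<and> (\<forall>x. val_ge 0 x \<longrightarrow> (\<exists>r\<in>R. val_ge 1 (x - r)))"
proof -
  define rel where "rel = {(x, y). x \<in> val_ring v \<and> y \<in> val_ring v \<and> x - y \<in> val_ideal v}"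
  have rel_iff: "(a, b) \<in> rel \<longleftrightarrow> val_ge 0 a \<and> val_ge 0 b \<and> val_ge 1 (a - b)" for a b
    unfolding rel_def by (simp add: val_ge_iff_val_ring val_ge_iff_val_ideal)
  have fin: "finite (val_ring v // rel)"
    using local_field by (simp add: local_field_val_def finite_residue_field_def rel_def)
  define R where "R = (\<lambda>C. SOME y. y \<in> C) ` (val_ring v // rel)"
  have rep: "(SOME y. y \<in> rel `` {x}) \<in> rel `` {x}" if "val_ge 0 x" for x
  proof (rule someI)
    show "x \<in> rel `` {x}" using that rel_iff by simp
  qed
  have "val_ge 0 r" if r: "r \<in> R" for r
  proof -
    obtain x where x: "x \<in> val_ring v" "r = (SOME y. y \<in> rel `` {x})"
      using r unfolding R_def by (auto elim: quotientE)
    then have "(x, r) \<in> rel" using rep[of x] by (simp add: val_ge_iff_val_ring)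
    then show ?thesis using rel_iff by blast
  qed
  moreover have "\<exists>r\<in>R. val_ge 1 (x - r)" if x: "val_ge 0 x" for x
  proof -
    have "rel `` {x} \<in> val_ring v // rel" using x by (simp add: quotientI val_ge_iff_val_ring)
    then have mem: "(SOME y. y \<in> rel `` {x}) \<in> R" unfolding R_def by (rule imageI)
    have "(x, SOME y. y \<in> rel `` {x}) \<in> rel" using rep[OF x] by simp
    then have "val_ge 1 (x - (SOME y. y \<in> rel `` {x}))" unfolding rel_iff by blast
    then show ?thesis using mem by blast
  qed
  moreover have "finite R" unfolding R_def using fin by simp
  ultimately show ?thesis by blast
qed

text \<open>Finite nets of \<open>O\<close> modulo \<open>\<pi>\<^sup>m\<close>, built as \<open>R\<^sub>m\<^sub>+\<^sub>1 = R\<^sub>1 + \<pi> R\<^sub>m\<close>.\<close>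

lemma val_ring_finite_net:
  "\<exists>R. finite R \<and> (\<forall>r\<in>R. val_ge 0 r) \<and> (\<forall>x. val_ge 0 x \<longrightarrow> (\<exists>r\<in>R. val_ge (int m) (x - r)))"
proof (induction m)
  case 0
  show ?case by (intro exI[of _ "{0}"]) simp
next
  case (Suc m)
  obtain R1 where R1: "finite R1" "\<forall>r\<in>R1. val_ge 0 r" "\<forall>x. val_ge 0 x \<longrightarrow> (\<exists>r\<in>R1. val_ge 1 (x - r))"
    using residue_representatives by blast
  obtain Rm where Rm: "finite Rm" "\<forall>r\<in>Rm. val_ge 0 r"
    "\<forall>x. val_ge 0 x \<longrightarrow> (\<exists>r\<in>Rm. val_ge (int m) (x - r))"
    using Suc by blast
  obtain \<pi> where \<pi>: "\<pi> \<noteq> 0" "v \<pi> = 1" using val_surj by blast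
  define R where "R = (\<lambda>p. fst p + \<pi> * snd p) ` (R1 \<times> Rm)"
  have \<pi>1: "val_ge 1 \<pi>" using val_ge_val[of \<pi>] \<pi> by simp
  have \<pi>0: "val_ge 0 \<pi>" using val_ge_mono[OF _ \<pi>1] by simp
  have inv\<pi>: "val_ge (- 1) (inverse \<pi>)" using val_ge_inverse[OF \<pi>(1)] \<pi> by simp
  have "\<exists>r\<in>R. val_ge (int (Suc m)) (x - r)" if x: "val_ge 0 x" for x
  proof -
    obtain r where r: "r \<in> R1" "val_ge 1 (x - r)" using R1(3) x by blast
    define y where "y = (x - r) * inverse \<pi>"
    have "val_ge 0 y" unfolding y_def using val_ge_mult[OF r(2) inv\<pi>] by simp
    then obtain s where s: "s \<in> Rm" "val_ge (int m) (y - s)" using Rm(3) by blast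
    have "x - (r + \<pi> * s) = \<pi> * (y - s)" unfolding y_def using \<pi>(1) by (simp add: field_simps)
    then have "val_ge (int (Suc m)) (x - (r + \<pi> * s))" using val_ge_mult[OF \<pi>1 s(2)] by simp
    moreover have "r + \<pi> * s \<in> R" unfolding R_def using r(1) s(1) by force
    ultimately show ?thesis by blast
  qed
  moreover have "finite R" unfolding R_def using R1(1) Rm(1) by simp
  moreover have "\<forall>r\<in>R. val_ge 0 r"
    unfolding R_def using R1(2) Rm(2) val_ge_add val_ge_mult[OF \<pi>0] by fastforce
  ultimately show ?case by blast
qed

lemma val_bounded_finite_net:
  assumes "0 \<le> k"
  shows "\<exists>R. finite R \<and> R \<subseteq> val_bounded k \<and> (\<forall>x\<in>val_bounded k. \<exists>r\<in>R. val_ge (int m) (x - r))"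
proof -
  obtain P where P: "P \<noteq> 0" "v P = k" using val_surj by blast
  have valP: "val_ge k P" using val_ge_val[of P] P by simp
  have invP: "val_ge (- k) (inverse P)" using val_ge_inverse[OF P(1)] P by simp
  obtain R0 where R0: "finite R0" "\<forall>r\<in>R0. val_ge 0 r"
    "\<forall>x. val_ge 0 x \<longrightarrow> (\<exists>r\<in>R0. val_ge (int (m + nat k)) (x - r))"
    using val_ring_finite_net by blast
  define R where "R = (\<lambda>r. r * inverse P) ` R0"
  have "\<exists>r\<in>R. val_ge (int m) (x - r)" if "x \<in> val_bounded k" for x
  proof -
    have "val_ge 0 (x * P)" using val_ge_mult[OF _ valP, of "- k" x] that by (simp add: val_bounded_def)
    then obtain r where r: "r \<in> R0" "val_ge (int (m + nat k)) (x * P - r)" using R0(3) by blast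
    have "x - r * inverse P = (x * P - r) * inverse P" using P(1) by (simp add: field_simps)
    then have "val_ge (int m) (x - r * inverse P)"
      using val_ge_mult[OF r(2) invP] assms by simp
    then show ?thesis unfolding R_def using r(1) by blast
  qed
  moreover have "finite R" unfolding R_def using R0(1) by simp
  moreover have "R \<subseteq> val_bounded k"
    unfolding R_def val_bounded_def using R0(2) val_ge_mult[OF _ invP] by fastforce
  ultimately show ?thesis by blast
qed

lemma mcomplete_val_dist: "Metric_space.mcomplete UNIV val_dist"
proof -
  interpret Metric_space UNIV val_dist by (rule Metric_space_val_dist)
  show ?thesis
    unfolding mcomplete_def
  proof (intro allI impI)
    fix \<sigma> :: "nat \<Rightarrow> 'k"
    assume Cauchy: "MCauchy \<sigma>"
    have "\<exists>N. \<forall>i\<ge>N. \<forall>j\<ge>N. val_close v n (\<sigma> i) (\<sigma> j)" for n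
    proof -
      have "(0::real) < 2 powr (- real_of_int n)" by simp
      then obtain N where N: "\<forall>i j. N \<le> i \<longrightarrow> N \<le> j \<longrightarrow> val_dist (\<sigma> i) (\<sigma> j) < 2 powr (- real_of_int n)"
        using Cauchy unfolding MCauchy_def by blast
      have "val_close v n (\<sigma> i) (\<sigma> j)" if "N \<le> i" "N \<le> j" for i j
        using N that val_ge_if_val_dist_less[of "\<sigma> j" "\<sigma> i" n] val_dist_commute val_ge_iff_val_close
        by metis
      then show ?thesis by blast
    qed
    then obtain L where L: "\<forall>n. \<exists>N. \<forall>i\<ge>N. val_close v n (\<sigma> i) L"
      using local_field unfolding local_field_val_def val_complete_def by blast
    have "\<forall>\<^sub>F i in sequentially. val_dist (\<sigma> i) L < \<epsilon>" if \<epsilon>: "0 < \<epsilon>" for \<epsilon>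
    proof -
      obtain n where n: "2 powr (- real_of_int n) < \<epsilon>" using exists_power_two_less[OF \<epsilon>] by blast
      obtain N where N: "\<forall>i\<ge>N. val_close v n (\<sigma> i) L" using L by blast
      have "val_dist (\<sigma> i) L < \<epsilon>" if "N \<le> i" for i
      proof -
        have "val_ge n (\<sigma> i - L)" using N that val_ge_iff_val_close by blast
        then have "val_dist L (\<sigma> i) \<le> 2 powr (- real_of_int n)" by (rule val_dist_le_if_val_ge)
        then show ?thesis using n val_dist_commute by (metis le_less_trans)
      qed
      then have "\<forall>i\<ge>N. val_dist (\<sigma> i) L < \<epsilon>" by blast
      then show ?thesis unfolding eventually_sequentially by blast
    qed
    then have "limitin mtopology \<sigma> L sequentially" unfolding limitin_metric by simp
    then show "\<exists>x. limitin mtopology \<sigma> x sequentially" by blast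
  qed
qed

lemma compactin_val_bounded:
  assumes "0 \<le> k"
  shows "compactin (val_topology v) (val_bounded k)"
proof -
  interpret Metric_space UNIV val_dist by (rule Metric_space_val_dist)
  have "mtotally_bounded (val_bounded k)"
    unfolding mtotally_bounded_def
  proof (intro allI impI)
    fix \<epsilon> :: real assume "0 < \<epsilon>"
    then obtain n where n: "2 powr (- real_of_int n) < \<epsilon>" using exists_power_two_less by blast
    obtain R where R: "finite R" "R \<subseteq> val_bounded k"
      "\<forall>x\<in>val_bounded k. \<exists>r\<in>R. val_ge (int (nat n)) (x - r)"
      using val_bounded_finite_net[OF assms] by blast
    have "val_bounded k \<subseteq> (\<Union>r\<in>R. mball r \<epsilon>)"
    proof
      fix x assume "x \<in> val_bounded k"
      then obtain r where r: "r \<in> R" "val_ge (int (nat n)) (x - r)" using R(3) by blast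
      then have "val_dist r x \<le> 2 powr (- real_of_int n)"
        using val_dist_le_if_val_ge val_ge_mono[of n "int (nat n)"] by simp
      then show "x \<in> (\<Union>r\<in>R. mball r \<epsilon>)" using r(1) n by force
    qed
    then show "\<exists>K. finite K \<and> K \<subseteq> val_bounded k \<and> val_bounded k \<subseteq> (\<Union>x\<in>K. mball x \<epsilon>)"
      using R(1,2) by blast
  qed
  then have "compactin mtopology (mtopology closure_of val_bounded k)"
    using mtotally_bounded_eq_compact_closure_of[OF mcomplete_val_dist] by blast
  moreover have "mtopology closure_of val_bounded k = val_bounded k"
    unfolding closure_of_eq mtopology_val_dist by (rule closedin_val_bounded)
  ultimately show ?thesis unfolding mtopology_val_dist by simp
qed

end


context discrete_val
begin

abbreviation mat2_topology :: "'k mat2 topology" where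
  "mat2_topology \<equiv> prod_topology (val_topology v)
     (prod_topology (val_topology v) (prod_topology (val_topology v) (val_topology v)))"

definition val_box :: "int \<Rightarrow> 'k mat2 \<Rightarrow> 'k mat2 set" where
  "val_box n a = val_ball n (fst a) \<times> (val_ball n (fst (snd a)) \<times>
     (val_ball n (fst (snd (snd a))) \<times> val_ball n (snd (snd (snd a)))))"

lemma mem_val_box: "(b1, b2, b3, b4) \<in> val_box n (a1, a2, a3, a4) \<longleftrightarrow>
   val_ge n (b1 - a1) \<and> val_ge n (b2 - a2) \<and> val_ge n (b3 - a3) \<and> val_ge n (b4 - a4)"
  unfolding val_box_def val_ball_def by simp

lemma closedin_mat2_topology_if_boxes:
  assumes "\<forall>a. a \<notin> C \<longrightarrow> (\<exists>n. val_box n a \<inter> C = {})"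
  shows "closedin mat2_topology C"
proof -
  have "\<forall>a\<in>- C. \<exists>U. openin mat2_topology U \<and> a \<in> U \<and> U \<subseteq> - C"
  proof
    fix a assume "a \<in> - C"
    then obtain n where "val_box n a \<inter> C = {}" using assms by blast
    moreover have "a \<in> val_box n a" by (cases a) (simp add: mem_val_box)
    moreover have "openin mat2_topology (val_box n a)"
      unfolding val_box_def by (simp add: openin_prod_Times_iff openin_val_ball)
    ultimately show "\<exists>U. openin mat2_topology U \<and> a \<in> U \<and> U \<subseteq> - C" by blast
  qed
  then have "openin mat2_topology (- C)" by (subst openin_subopen) blast
  then show ?thesis unfolding closedin_def by (simp add: Compl_eq_Diff_UNIV)
qed

lemma compactin_mat2_topology_val_bounded:
  assumes "local_field_val v" "0 \<le> k"
  shows "compactin mat2_topology (val_bounded k \<times> (val_bounded k \<times> (val_bounded k \<times> val_bounded k)))"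
  using local_field.compactin_val_bounded[OF local_field.intro[OF assms(1)] assms(2)]
  by (simp add: compactin_Times)

lemma topspace_SL2_topology [simp]: "topspace (SL2_topology v) = SL2"
  unfolding SL2_topology_def by simp

lemma openin_PSL2_topology:
  "openin (PSL2_topology v) W \<longleftrightarrow> W \<subseteq> carrier PSL2 \<and> openin (SL2_topology v) (\<Union>W)"
proof -
  have istop: "istopology (\<lambda>W. W \<subseteq> carrier PSL2 \<and> openin (SL2_topology v) (\<Union>W))"
    unfolding istopology_def
  proof (rule conjI; intro allI impI)
    fix S T :: "'k mat2 set set"
    assume S: "S \<subseteq> carrier PSL2 \<and> openin (SL2_topology v) (\<Union>S)"
      and T: "T \<subseteq> carrier PSL2 \<and> openin (SL2_topology v) (\<Union>T)"
    have "\<Union>(S \<inter> T) = \<Union>S \<inter> \<Union>T"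
    proof (intro Set.set_eqI iffI)
      fix x assume "x \<in> \<Union>S \<inter> \<Union>T"
      then obtain A B where AB: "A \<in> S" "B \<in> T" "x \<in> A" "x \<in> B" by blast
      \<comment> \<open>distinct classes are disjoint\<close>
      then have "A = B" using S T PSL2_elem_eq_psl_class by (metis subsetD)
      then show "x \<in> \<Union>(S \<inter> T)" using AB by blast
    qed blast
    then show "S \<inter> T \<subseteq> carrier PSL2 \<and> openin (SL2_topology v) (\<Union>(S \<inter> T))"
      using S T by auto
  next
    fix K :: "'k mat2 set set set"
    assume K: "\<forall>W\<in>K. W \<subseteq> carrier PSL2 \<and> openin (SL2_topology v) (\<Union>W)"
    have "\<Union>(\<Union>K) = \<Union>(Union ` K)" by blast
    moreover have "openin (SL2_topology v) (\<Union>(Union ` K))" using K by (intro openin_Union) auto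
    ultimately show "\<Union>K \<subseteq> carrier PSL2 \<and> openin (SL2_topology v) (\<Union>(\<Union>K))" using K by auto
  qed
  show ?thesis unfolding PSL2_topology_def topology_inverse'[OF istop] ..
qed

lemma topspace_PSL2_topology: "topspace (PSL2_topology v) = carrier PSL2"
proof -
  have "openin (PSL2_topology v) (carrier (PSL2 :: 'k mat2 set monoid))"
    unfolding openin_PSL2_topology Union_carrier_PSL2
    using openin_topspace[of "SL2_topology v"] by simp
  then have "carrier PSL2 \<subseteq> topspace (PSL2_topology v)" by (rule openin_subset)
  moreover have "topspace (PSL2_topology v) \<subseteq> carrier PSL2"
    using openin_PSL2_topology[of "topspace (PSL2_topology v)"] by simp
  ultimately show ?thesis by blast
qed

lemma continuous_map_psl_class: "continuous_map (SL2_topology v) (PSL2_topology v) psl_class"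
  unfolding continuous_map
proof (intro conjI allI impI)
  show "psl_class ` topspace (SL2_topology v) \<subseteq> topspace (PSL2_topology v)"
    unfolding topspace_PSL2_topology topspace_SL2_topology carrier_PSL2 by blast
next
  fix U assume "openin (PSL2_topology v) U"
  then have U: "U \<subseteq> carrier PSL2" "openin (SL2_topology v) (\<Union>U)"
    unfolding openin_PSL2_topology by auto
  have "{x \<in> topspace (SL2_topology v). psl_class x \<in> U} = \<Union>U"
  proof (intro Set.set_eqI iffI)
    fix x assume "x \<in> {x \<in> topspace (SL2_topology v). psl_class x \<in> U}"
    then show "x \<in> \<Union>U" using mem_psl_class by blast
  next
    fix x assume "x \<in> \<Union>U"
    then obtain A where A: "A \<in> U" "x \<in> A" by blast
    then have "A = psl_class x" using U(1) PSL2_elem_eq_psl_class by blast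
    moreover have "x \<in> SL2" using A U(1) Union_carrier_PSL2 by blast
    ultimately show "x \<in> {x \<in> topspace (SL2_topology v). psl_class x \<in> U}" using A by simp
  qed
  then show "openin (SL2_topology v) {x \<in> topspace (SL2_topology v). psl_class x \<in> U}"
    using U(2) by simp
qed

end


section \<open>Bounded subgroups lie in compact subgroups\<close>

text \<open>It is stable under \<open>G\<close>, and for bounded \<open>G\<close> it lies between
  \<open>O\<^sup>2\<close> and \<open>\<pi>\<^sup>-\<^sup>K O\<^sup>2\<close>; its stabiliser is then compact.\<close>

inductive_set orbit_lattice :: "('k::field \<Rightarrow> int) \<Rightarrow> 'k mat2 set \<Rightarrow> ('k \<times> 'k) set" for v G where
  generator: "g \<in> G \<Longrightarrow> x \<in> val_ring v \<Longrightarrow> y \<in> val_ring v \<Longrightarrow> m2app g (x, y) \<in> orbit_lattice v G"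
| add: "u \<in> orbit_lattice v G \<Longrightarrow> w \<in> orbit_lattice v G \<Longrightarrow>
    (fst u + fst w, snd u + snd w) \<in> orbit_lattice v G"

locale bounded_SL2_subgroup = local_field v for v :: "'k::field \<Rightarrow> int" +
  fixes G :: "'k mat2 set" and K :: int
  assumes subset_SL2: "G \<subseteq> SL2"
    and id_mem: "m2id \<in> G"
    and mult_mem: "g \<in> G \<Longrightarrow> h \<in> G \<Longrightarrow> m2mult g h \<in> G"
    and adj_mem: "g \<in> G \<Longrightarrow> m2adj g \<in> G"
    and bounded: "g \<in> G \<Longrightarrow> entries_bounded K g"
    and bound_nonneg: "0 \<le> K"
begin

abbreviation L :: "('k \<times> 'k) set" where
  "L \<equiv> orbit_lattice v G"

lemma orbit_lattice_act: "u \<in> L \<Longrightarrow> g \<in> G \<Longrightarrow> m2app g u \<in> L"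
proof (induction u rule: orbit_lattice.induct)
  case (generator h x y)
  then show ?case using mult_mem orbit_lattice.generator by (metis m2app_mult)
next
  case (add u w)
  then show ?case unfolding m2app_add by (blast intro: orbit_lattice.add)
qed

lemma orbit_lattice_val_ring: "val_ge 0 x \<Longrightarrow> val_ge 0 y \<Longrightarrow> (x, y) \<in> L"
  using orbit_lattice.generator[OF id_mem, where x = x and y = y] by (simp add: val_ge_iff_val_ring m2app_id)

lemma orbit_lattice_add_val_ring:
  "u \<in> L \<Longrightarrow> val_ge 0 x \<Longrightarrow> val_ge 0 y \<Longrightarrow> (fst u + x, snd u + y) \<in> L"
  using orbit_lattice.add[OF _ orbit_lattice_val_ring[of x y]] by simp

lemma orbit_lattice_bounded: "u \<in> L \<Longrightarrow> val_ge (- K) (fst u) \<and> val_ge (- K) (snd u)"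
proof (induction u rule: orbit_lattice.induct)
  case (generator h x y)
  obtain a b c d where h: "h = (a, b, c, d)" by (cases h) auto
  have "val_ge (- K) a" "val_ge (- K) b" "val_ge (- K) c" "val_ge (- K) d"
    using bounded[OF generator(1)] h by auto
  moreover have "val_ge 0 x" "val_ge 0 y" using generator by (simp_all add: val_ge_iff_val_ring)
  moreover have "val_ge (- K) (p * q)" if "val_ge (- K) p" "val_ge 0 q" for p q
    using val_ge_mult[OF that] by simp
  ultimately show ?case unfolding h by (simp add: val_ge_add)
next
  case (add u w)
  then show ?case by (simp add: val_ge_add)
qed

definition stabiliser :: "'k mat2 set" where
  "stabiliser = {a. m2det a = 1 \<and> (\<forall>u\<in>L. m2app a u \<in> L \<and> m2app (m2adj a) u \<in> L)}"

lemma subset_stabiliser: "G \<subseteq> stabiliser"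
proof
  fix g assume g: "g \<in> G"
  then have "m2det g = 1" using subset_SL2 SL2_iff by blast
  then show "g \<in> stabiliser" unfolding stabiliser_def using g adj_mem orbit_lattice_act by blast
qed

lemma stabiliser_SL2: "stabiliser \<subseteq> SL2"
  unfolding stabiliser_def by (auto simp: SL2_iff)

lemma stabiliser_mult: "a \<in> stabiliser \<Longrightarrow> b \<in> stabiliser \<Longrightarrow> m2mult a b \<in> stabiliser"
  unfolding stabiliser_def by (simp add: m2det_mult m2app_mult m2adj_mult)

lemma stabiliser_adj: "a \<in> stabiliser \<Longrightarrow> m2adj a \<in> stabiliser"
  unfolding stabiliser_def by simp

lemma stabiliser_bounded: "stabiliser \<subseteq> val_bounded K \<times> (val_bounded K \<times> (val_bounded K \<times> val_bounded K))"
proof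
  fix a assume a: "a \<in> stabiliser"
  obtain a1 a2 a3 a4 where a_def: "a = (a1, a2, a3, a4)" by (cases a) auto
  have "(1, 0) \<in> L" "(0, 1) \<in> L" using orbit_lattice_val_ring val_ge_one by auto
  then have "m2app a (1, 0) \<in> L" "m2app a (0, 1) \<in> L" using a unfolding stabiliser_def by auto
  then show "a \<in> val_bounded K \<times> (val_bounded K \<times> (val_bounded K \<times> val_bounded K))"
    using orbit_lattice_bounded unfolding a_def val_bounded_def by force
qed

lemma m2det_val_box:
  assumes "entries_bounded k a" "0 \<le> k" "k \<le> n" "b \<in> val_box n a"
  shows "val_ge (n - k) (m2det b - m2det a)"
proof -
  obtain a1 a2 a3 a4 where a_def: "a = (a1, a2, a3, a4)" by (cases a) auto
  obtain b1 b2 b3 b4 where b_def: "b = (b1, b2, b3, b4)" by (cases b) auto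
  define e1 e2 e3 e4 where "e1 = b1 - a1" and "e2 = b2 - a2" and "e3 = b3 - a3" and "e4 = b4 - a4"
  have E: "val_ge n e1" "val_ge n e2" "val_ge n e3" "val_ge n e4"
    using assms(4) unfolding a_def b_def e1_def e2_def e3_def e4_def mem_val_box by auto
  have A: "val_ge (- k) a1" "val_ge (- k) a2" "val_ge (- k) a3" "val_ge (- k) a4"
    using assms(1) a_def by auto
  have eq: "m2det b - m2det a = (e1 * a4 + a1 * e4 + e1 * e4) - (e2 * a3 + a2 * e3 + e2 * e3)"
    unfolding a_def b_def e1_def e2_def e3_def e4_def by (simp add: algebra_simps)
  have p1: "val_ge (n - k) (p * q)" and p2: "val_ge (n - k) (q * p)"
    if "val_ge n p" "val_ge (- k) q" for p q
    using val_ge_mult[OF that] val_ge_mult[OF that(2,1)] by (simp_all add: add.commute)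
  have p3: "val_ge (n - k) (p * q)" if "val_ge n p" "val_ge n q" for p q
    using val_ge_mult[OF that] val_ge_mono[of "n - k" "n + n"] assms(2,3) by simp
  show ?thesis unfolding eq using E A p1 p2 p3 by (intro val_ge_diff val_ge_add) auto
qed

lemma m2app_val_box_orbit_lattice:
  assumes u: "u \<in> L" and b: "b \<in> val_box K a" and bu: "m2app b u \<in> L"
  shows "m2app a u \<in> L"
proof -
  obtain a1 a2 a3 a4 where a_def: "a = (a1, a2, a3, a4)" by (cases a) auto
  obtain b1 b2 b3 b4 where b_def: "b = (b1, b2, b3, b4)" by (cases b) auto
  obtain u1 u2 where u_def: "u = (u1, u2)" by (cases u) auto
  have U: "val_ge (- K) u1" "val_ge (- K) u2" using orbit_lattice_bounded[OF u] u_def by auto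
  have "val_ge K (a1 - b1)" "val_ge K (a2 - b2)" "val_ge K (a3 - b3)" "val_ge K (a4 - b4)"
    using b unfolding a_def b_def mem_val_box by (simp_all add: val_ge_diff_commute[of K a1] val_ge_diff_commute[of K a2]
        val_ge_diff_commute[of K a3] val_ge_diff_commute[of K a4])
  moreover have "val_ge 0 (p * q)" if "val_ge K p" "val_ge (- K) q" for p q
    using val_ge_mult[OF that] by simp
  ultimately have "val_ge 0 ((a1 - b1) * u1 + (a2 - b2) * u2)" "val_ge 0 ((a3 - b3) * u1 + (a4 - b4) * u2)"
    using U val_ge_add by auto
  from orbit_lattice_add_val_ring[OF bu this] show ?thesis
    unfolding a_def b_def u_def by (simp add: algebra_simps)
qed

lemma m2adj_mem_val_box:
  assumes "b \<in> val_box n a"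
  shows "m2adj b \<in> val_box n (m2adj a)"
proof -
  obtain a1 a2 a3 a4 where a_def: "a = (a1, a2, a3, a4)" by (cases a) auto
  obtain b1 b2 b3 b4 where b_def: "b = (b1, b2, b3, b4)" by (cases b) auto
  have "val_ge n (a2 - b2)" "val_ge n (a3 - b3)"
    using assms unfolding a_def b_def mem_val_box by (simp_all add: val_ge_diff_commute[of n a2] val_ge_diff_commute[of n a3])
  then show ?thesis using assms unfolding a_def b_def by (simp add: mem_val_box)
qed

lemma closedin_stabiliser: "closedin mat2_topology stabiliser"
proof (rule closedin_mat2_topology_if_boxes, intro allI impI)
  fix a assume a: "a \<notin> stabiliser"
  show "\<exists>n. val_box n a \<inter> stabiliser = {}"
  proof (cases "m2det a = 1")
    case False
    obtain k0 where k0: "entries_bounded k0 a" using entries_bounded_exists by blast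
    define k where "k = max k0 0"
    have k: "entries_bounded k a" "0 \<le> k" using entries_bounded_mono[OF _ k0, of k] unfolding k_def by auto
    define N where "N = v (m2det a - 1) + 1"
    have "b \<notin> stabiliser" if b: "b \<in> val_box (max 0 N + k) a" for b
    proof
      assume "b \<in> stabiliser"
      then have "m2det a - 1 = - (m2det b - m2det a)" unfolding stabiliser_def by simp
      moreover have "val_ge (max 0 N + k - k) (m2det b - m2det a)"
        using m2det_val_box[OF k _ b] by simp
      ultimately have "val_ge (max 0 N + k - k) (m2det a - 1)" by (simp only: val_ge_uminus)
      then have "val_ge N (m2det a - 1)" using val_ge_mono[of N "max 0 N + k - k"] by simp
      then show False using not_val_ge_val_plus_one False unfolding N_def by simp
    qed
    then show ?thesis by blast
  next
    case True
    then obtain u where u: "u \<in> L" "m2app a u \<notin> L \<or> m2app (m2adj a) u \<notin> L"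
      using a unfolding stabiliser_def by blast
    \<comment> \<open>\<open>L\<close> contains \<open>O\<^sup>2\<close> and lies in \<open>\<pi>\<^sup>-\<^sup>K O\<^sup>2\<close>, so it does not see perturbations in \<open>\<pi>\<^sup>K\<close>\<close>
    have "b \<notin> stabiliser" if b: "b \<in> val_box K a" for b
    proof
      assume "b \<in> stabiliser"
      then have "m2app b u \<in> L" "m2app (m2adj b) u \<in> L" using u(1) unfolding stabiliser_def by auto
      then have "m2app a u \<in> L" "m2app (m2adj a) u \<in> L"
        using m2app_val_box_orbit_lattice[OF u(1) b]
          m2app_val_box_orbit_lattice[OF u(1) m2adj_mem_val_box[OF b]] by auto
      then show False using u(2) by blast
    qed
    then show ?thesis by blast
  qed
qed

lemma compactin_stabiliser: "compactin (SL2_topology v) stabiliser"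
proof -
  have "compactin mat2_topology stabiliser"
    using closed_compactin[OF compactin_mat2_topology_val_bounded[OF local_field bound_nonneg]
        stabiliser_bounded closedin_stabiliser] .
  then show ?thesis unfolding SL2_topology_def compactin_subtopology using stabiliser_SL2 by blast
qed

lemma subgroup_psl_class_stabiliser: "subgroup (psl_class ` stabiliser) PSL2"
proof (rule subgroup.intro)
  show "psl_class ` stabiliser \<subseteq> carrier PSL2"
    unfolding carrier_PSL2 using stabiliser_SL2 by (rule image_mono)
next
  fix x y assume "x \<in> psl_class ` stabiliser" "y \<in> psl_class ` stabiliser"
  then obtain a b where "a \<in> stabiliser" "b \<in> stabiliser" "x = psl_class a" "y = psl_class b" by blast
  then show "x \<otimes>\<^bsub>PSL2\<^esub> y \<in> psl_class ` stabiliser"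
    using stabiliser_mult by (simp add: mult_PSL2)
next
  show "\<one>\<^bsub>PSL2\<^esub> \<in> psl_class ` stabiliser"
    unfolding one_PSL2 using subset_stabiliser id_mem by blast
next
  fix x assume "x \<in> psl_class ` stabiliser"
  then obtain a where "a \<in> stabiliser" "x = psl_class a" by blast
  moreover have "a \<in> SL2" using calculation(1) stabiliser_SL2 by blast
  ultimately show "inv\<^bsub>PSL2\<^esub> x \<in> psl_class ` stabiliser"
    using stabiliser_adj by (simp add: inv_PSL2)
qed

lemma psl_class_in_compact_subgroup:
  "\<exists>C. subgroup C PSL2 \<and> compactin (PSL2_topology v) C \<and> psl_class ` G \<subseteq> C"
  using subgroup_psl_class_stabiliser image_compactin[OF compactin_stabiliser continuous_map_psl_class]
    subset_stabiliser by blast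

end

lemma (in local_field) bounded_subgroup_in_compact_subgroup:
  assumes "subgroup H PSL2" "\<forall>g\<in>\<Union>H. entries_bounded k g"
  shows "\<exists>C. subgroup C PSL2 \<and> compactin (PSL2_topology v) C \<and> H \<subseteq> C"
proof -
  have "bounded_SL2_subgroup v (\<Union>H) (max k 0)"
  proof (intro bounded_SL2_subgroup.intro bounded_SL2_subgroup_axioms.intro)
    show "local_field v" by (rule local_field_axioms)
    show "\<Union>H \<subseteq> SL2" "m2id \<in> \<Union>H" by (rule subgroup_PSL2_Union[OF assms(1)])+
    show "m2mult g h \<in> \<Union>H" if "g \<in> \<Union>H" "h \<in> \<Union>H" for g h
      using subgroup_PSL2_Union(3)[OF assms(1) that] .
    show "m2adj g \<in> \<Union>H" if "g \<in> \<Union>H" for g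
      using subgroup_PSL2_Union(4)[OF assms(1) that] .
    show "entries_bounded (max k 0) g" if "g \<in> \<Union>H" for g
      using assms(2) that entries_bounded_mono[OF max.cobounded1] by blast
  qed simp
  then have "\<exists>C. subgroup C PSL2 \<and> compactin (PSL2_topology v) C \<and> psl_class ` \<Union>H \<subseteq> C"
    by (rule bounded_SL2_subgroup.psl_class_in_compact_subgroup)
  then obtain C where C: "subgroup C PSL2 \<and> compactin (PSL2_topology v) C \<and> psl_class ` \<Union>H \<subseteq> C" ..
  have "H \<subseteq> psl_class ` \<Union>H"
  proof
    fix A assume A: "A \<in> H"
    then obtain a where "A = psl_class a" using subgroup.subset[OF assms(1)] carrier_PSL2 by blast
    then show "A \<in> psl_class ` \<Union>H" using A mem_psl_class by blast
  qed
  then have "H \<subseteq> C" using conjunct2[OF conjunct2[OF C]] by (rule subset_trans)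
  then have "subgroup C PSL2 \<and> compactin (PSL2_topology v) C \<and> H \<subseteq> C" using C by simp
  then show ?thesis ..
qed


lemma (in local_field) hom_PSL2_normal_image_trivial:
  assumes hom: "group_hom \<Gamma> PSL2 \<rho>" and "normal \<Upsilon> \<Gamma>"
    and "zariski_dense_PSL2 (\<rho> ` carrier \<Gamma>)"
    and "\<not> (\<exists>C. subgroup C PSL2 \<and> compactin (PSL2_topology v) C \<and> \<rho> ` carrier \<Gamma> \<subseteq> C)"
    and j: "\<forall>n\<in>\<Union>(\<rho> ` \<Upsilon>). entries_bounded j n"
    and u: "u \<in> \<Upsilon>"
  shows "\<rho> u = \<one>\<^bsub>PSL2\<^esub>"
proof (rule ccontr)
  assume ne: "\<rho> u \<noteq> \<one>\<^bsub>PSL2\<^esub>"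
  let ?H = "\<rho> ` carrier \<Gamma>"
  have H: "subgroup ?H PSL2" by (rule group_hom.img_is_subgroup[OF hom])
  have "u \<in> carrier \<Gamma>" using u assms(2) normal_imp_subgroup subgroup.subset by blast
  then have "\<rho> u \<in> carrier PSL2" by (rule group_hom.hom_closed[OF hom])
  then obtain n where n: "n \<in> \<rho> u" "n \<in> SL2" "n \<noteq> m2id" "n \<noteq> m2neg m2id"
    using ne by (rule PSL2_noncentral_representative)
  have conj: "\<forall>g\<in>\<Union>?H. \<forall>x\<in>\<Union>(\<rho> ` \<Upsilon>). m2conj x g \<in> \<Union>(\<rho> ` \<Upsilon>)"
    using hom_PSL2_normal_m2conj_closed[OF hom assms(2)] by blast
  have "n \<in> \<Union>(\<rho> ` \<Upsilon>)" using n(1) u by blast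
  then have "\<exists>k. \<forall>g\<in>\<Union>?H. entries_bounded k g"
    by (rule bounded_if_normalises_bounded_noncentral[OF subgroup_PSL2_Union(1)[OF H]
        assms(3)[unfolded zariski_dense_PSL2_def] _ n(2-4) conj j])
  then obtain k where "\<forall>g\<in>\<Union>?H. entries_bounded k g" ..
  then show False by (rule notE[OF assms(4) bounded_subgroup_in_compact_subgroup[OF H]])
qed

theorem lemma4p14:
  fixes v :: "'k::field \<Rightarrow> int"
    and \<Gamma> :: "('g, 'b) monoid_scheme"
    and \<rho> :: "'g \<Rightarrow> 'k mat2 set"
    and \<Upsilon> :: "'g set"
  assumes "local_field_val v"
    and "group \<Gamma>"
    and "\<rho> \<in> hom \<Gamma> PSL2"
    and "normal \<Upsilon> \<Gamma>"
    and "BT_fixed_points v (\<rho> ` \<Upsilon>) \<noteq> {}"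
    and "zariski_dense_PSL2 (\<rho> ` carrier \<Gamma>)"
    and "\<not> (\<exists>H. subgroup H PSL2 \<and> compactin (PSL2_topology v) H \<and> \<rho> ` carrier \<Gamma> \<subseteq> H)"
  shows "\<rho> ` \<Upsilon> = {\<one>\<^bsub>PSL2\<^esub>}"
proof -
  interpret local_field v by (rule local_field.intro) fact
  have hom: "group_hom \<Gamma> PSL2 \<rho>"
    using assms(2,3) group_PSL2 by (simp add: group_hom_def group_hom_axioms_def)
  have \<Upsilon>: "\<Upsilon> \<subseteq> carrier \<Gamma>" "\<one>\<^bsub>\<Gamma>\<^esub> \<in> \<Upsilon>"
    using assms(4) normal_imp_subgroup subgroup.subset subgroup.one_closed by blast+
  have "\<rho> ` \<Upsilon> \<subseteq> carrier PSL2" using \<Upsilon>(1) group_hom.hom_closed[OF hom] by blast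
  then have "\<exists>j. \<forall>n\<in>\<Union>(\<rho> ` \<Upsilon>). entries_bounded j n"
    using assms(5) by (rule BT_fixed_points_Union_bounded)
  then obtain j where j: "\<forall>n\<in>\<Union>(\<rho> ` \<Upsilon>). entries_bounded j n" ..
  have "\<rho> u = \<one>\<^bsub>PSL2\<^esub>" if "u \<in> \<Upsilon>" for u
    by (rule hom_PSL2_normal_image_trivial[OF hom assms(4,6,7) j that])
  then show ?thesis using \<Upsilon>(2) by force
qed

end
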